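(* Let $\mathcal{M}$ be a relative category. Then $N_\xi\mathcal{M}$ is Reedy fibrant if and only if, for all $n\ge1$, $m\ge0$ and $0\le k\le n$, every relative functor $\mathcal{S}_{k,n,m}\to\mathcal{M}$ extends to a relative functor $\xi(\hat{\underline n}\times\check{\underline m})\to\mathcal{M}$, where $\mathcal{S}_{k,n,m}\subseteq\xi(\hat{\underline n}\times\check{\underline m})$ is the full relative subposet $c\mathrm{Sd}^2(\Lambda^k[n]\times\Delta[m]\cup_{\Lambda^k[n]\times\partial\Delta[m]}\Delta[n]\times\partial\Delta[m])$ described below.
   Context: A relative category is a category with a subcategory of weak equivalences containing all objects; relative functors preserve weak equivalences; $\mathrm{RelCat}$ is their category. For a poset $P$ with a relative structure, $\xi P$ is the relative poset whose objects are strictly increasing sequences $A_0\subsetneq\dots\subsetneq A_r$ ($r\ge0$) of non-empty finite totally ordered subsets of $P$, with $B_\bullet\le A_\bullet$ iff each $B_j$ occurs among the $A_i$, a weak equivalence iff $\min B_0\le\min A_0$ is a weak equivalence of $P$. Here $\underline p=(0<\dots<p)$, $\check{\underline p}$ has only identities as weak equivalences, $\hat{\underline q}$ has all morphisms as weak equivalences, and products carry componentwise weak equivalences; so in $\hat{\underline n}\times\check{\underline m}$ the relation $(a,u)\le(a',u')$ is a weak equivalence iff $u=u'$. The underlying poset of $\xi(\hat{\underline n}\times\check{\underline m})$ is $c\mathrm{Sd}^2(\Delta[n]\times\Delta[m])$ ($c$ = fundamental category, $\mathrm{Sd}$ = barycentric subdivision). A totally ordered subset $S$ of $[n]\times[m]$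 lies in $\Lambda^k[n]\times\Delta[m]\cup\Delta[n]\times\partial\Delta[m]$ iff its set of first coordinates is neither $[n]$ nor $[n]\setminus\{k\}$ or its set of second coordinates is not all of $[m]$; $\mathcal{S}_{k,n,m}$ is the full subposet of chains $A_0\subsetneq\dots\subsetneq A_r$ whose largest member $A_r$ has this property, with the induced relative structure. $N_\xi\mathcal{M}$ is the bisimplicial set $(p,q)\mapsto\mathrm{RelCat}(\xi(\check{\underline p}\times\hat{\underline q}),\mathcal{M})$; viewed as the simplicial object $p\mapsto(N_\xi\mathcal{M})_{p\bullet}$ in simplicial sets, it is Reedy fibrant if all matching maps are Kan fibrations. *)

theory Defs
  imports Main
begin

record ('o, 'm) relcat =
  Ob   :: "'o set"
  Ar   :: "'m set"
  Dom  :: "'m \<Rightarrow> 'o"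
  Cod  :: "'m \<Rightarrow> 'o"
  Comp :: "'m \<Rightarrow> 'm \<Rightarrow> 'm"   (* Comp g f = g o f *)
  Idm  :: "'o \<Rightarrow> 'm"
  We   :: "'m set"

definition is_relcat :: "('o, 'm) relcat \<Rightarrow> bool" where
  "is_relcat M \<longleftrightarrow>
     (\<forall>f\<in>Ar M. Dom M f \<in> Ob M \<and> Cod M f \<in> Ob M) \<and>
     (\<forall>x\<in>Ob M. Idm M x \<in> Ar M \<and> Dom M (Idm M x) = x \<and> Cod M (Idm M x) = x) \<and>
     (\<forall>f\<in>Ar M. \<forall>g\<in>Ar M. Cod M f = Dom M g \<longrightarrow>
        Comp M g f \<in> Ar M \<and> Dom M (Comp M g f) = Dom M f \<and> Cod M (Comp M g f) = Cod M g) \<and>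
     (\<forall>f\<in>Ar M. Comp M (Idm M (Cod M f)) f = f \<and> Comp M f (Idm M (Dom M f)) = f) \<and>
     (\<forall>f\<in>Ar M. \<forall>g\<in>Ar M. \<forall>h\<in>Ar M. Cod M f = Dom M g \<longrightarrow> Cod M g = Dom M h \<longrightarrow>
        Comp M h (Comp M g f) = Comp M (Comp M h g) f) \<and>
     We M \<subseteq> Ar M \<and>
     (\<forall>x\<in>Ob M. Idm M x \<in> We M) \<and>
     (\<forall>f\<in>We M. \<forall>g\<in>We M. Cod M f = Dom M g \<longrightarrow> Comp M g f \<in> We M)"

record 'p relposet =
  pcar :: "'p set"
  ple  :: "'p \<Rightarrow> 'p \<Rightarrow> bool"
  pwe  :: "'p \<Rightarrow> 'p \<Rightarrow> bool"

text \<open>A functor from a poset P to M is given by its value F p q on each relation p \<le> q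
  (objects are recovered as domains of identities); it is extensional (undefined elsewhere).\<close>
definition relfun :: "'p relposet \<Rightarrow> ('o, 'm) relcat \<Rightarrow> ('p \<Rightarrow> 'p \<Rightarrow> 'm) \<Rightarrow> bool" where
  "relfun P M F \<longleftrightarrow>
     (\<forall>p\<in>pcar P. \<forall>q\<in>pcar P. ple P p q \<longrightarrow>
        F p q \<in> Ar M \<and> Dom M (F p q) = Dom M (F p p) \<and> Cod M (F p q) = Dom M (F q q)) \<and>
     (\<forall>p\<in>pcar P. F p p = Idm M (Dom M (F p p))) \<and>
     (\<forall>p\<in>pcar P. \<forall>q\<in>pcar P. \<forall>r\<in>pcar P. ple P p q \<longrightarrow> ple P q r \<longrightarrow>
        Comp M (F q r) (F p q) = F p r) \<and>
     (\<forall>p\<in>pcar P. \<forall>q\<in>pcar P. pwe P p q \<longrightarrow> F p q \<in> We M) \<and>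
     (\<forall>p q. \<not> (p \<in> pcar P \<and> q \<in> pcar P \<and> ple P p q) \<longrightarrow> F p q = undefined)"

definition chain_min :: "('p \<Rightarrow> 'p \<Rightarrow> bool) \<Rightarrow> 'p set \<Rightarrow> 'p" where
  "chain_min le S = (THE x. x \<in> S \<and> (\<forall>y\<in>S. le x y))"

definition xi_chain :: "'p relposet \<Rightarrow> 'p set list \<Rightarrow> bool" where
  "xi_chain P As \<longleftrightarrow> As \<noteq> [] \<and>
     (\<forall>A\<in>set As. A \<noteq> {} \<and> finite A \<and> A \<subseteq> pcar P \<and>
        (\<forall>x\<in>A. \<forall>y\<in>A. ple P x y \<or> ple P y x)) \<and>
     sorted_wrt (\<subset>) As"

text \<open>Objects: chains A_0 < ... < A_r (as lists); B \<le> A iff every B_j occurs among the A_i;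
  weak equivalence iff moreover min B_0 \<le> min A_0 is a weak equivalence of P.\<close>
definition xi :: "'p relposet \<Rightarrow> 'p set list relposet" where
  "xi P = \<lparr> pcar = {As. xi_chain P As},
            ple = (\<lambda>Bs As. set Bs \<subseteq> set As),
            pwe = (\<lambda>Bs As. set Bs \<subseteq> set As \<and>
                     pwe P (chain_min (ple P) (hd Bs)) (chain_min (ple P) (hd As))) \<rparr>"

definition grid_le :: "nat \<times> nat \<Rightarrow> nat \<times> nat \<Rightarrow> bool" where
  "grid_le x y \<longleftrightarrow> fst x \<le> fst y \<and> snd x \<le> snd y"

text \<open>check p times hat q: weak equivalences are the relations with equal first coordinate.\<close>
definition check_hat :: "nat \<Rightarrow> nat \<Rightarrow> (nat \<times> nat) relposet" where
  "check_hat p q = \<lparr> pcar = {0..p} \<times> {0..q}, ple = grid_le,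
                     pwe = (\<lambda>x y. grid_le x y \<and> fst x = fst y) \<rparr>"

text \<open>hat n times check m: weak equivalences are the relations with equal second coordinate.\<close>
definition hat_check :: "nat \<Rightarrow> nat \<Rightarrow> (nat \<times> nat) relposet" where
  "hat_check n m = \<lparr> pcar = {0..n} \<times> {0..m}, ple = grid_le,
                     pwe = (\<lambda>x y. grid_le x y \<and> snd x = snd y) \<rparr>"

definition NX :: "('o, 'm) relcat \<Rightarrow> nat \<Rightarrow> nat \<Rightarrow> ((nat \<times> nat) set list \<Rightarrow> (nat \<times> nat) set list \<Rightarrow> 'm) set" where
  "NX M p q = {F. relfun (xi (check_hat p q)) M F}"

text \<open>Image of a chain under a monotone map (repetitions removed): the functoriality of xi.\<close>
definition ximg :: "('a \<Rightarrow> 'b) \<Rightarrow> 'a set list \<Rightarrow> 'b set list" where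
  "ximg f As = remdups_adj (map (\<lambda>A. f ` A) As)"

text \<open>Simplicial operator induced by \<open>\<alpha> : [p'] \<rightarrow> [p]\<close>, \<open>\<beta> : [q'] \<rightarrow> [q]\<close>:
  precomposition with xi(\<alpha> \<times> \<beta>).\<close>
definition NXmap :: "nat \<Rightarrow> nat \<Rightarrow> (nat \<Rightarrow> nat) \<Rightarrow> (nat \<Rightarrow> nat) \<Rightarrow>
    ((nat \<times> nat) set list \<Rightarrow> (nat \<times> nat) set list \<Rightarrow> 'm) \<Rightarrow>
    ((nat \<times> nat) set list \<Rightarrow> (nat \<times> nat) set list \<Rightarrow> 'm)" where
  "NXmap p' q' \<alpha> \<beta> F = (\<lambda>Bs As.
     if Bs \<in> pcar (xi (check_hat p' q')) \<and> As \<in> pcar (xi (check_hat p' q')) \<and> set Bs \<subseteq> set As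
     then F (ximg (map_prod \<alpha> \<beta>) Bs) (ximg (map_prod \<alpha> \<beta>) As) else undefined)"

definition coface :: "nat \<Rightarrow> nat \<Rightarrow> nat" where
  "coface i j = (if j < i then j else Suc j)"

text \<open>Horizontal face d_i : (N_xi M)_{p,q} \<rightarrow> (N_xi M)_{p-1,q} and vertical face
  d_j : (N_xi M)_{p,q} \<rightarrow> (N_xi M)_{p,q-1}.\<close>
definition hface :: "nat \<Rightarrow> nat \<Rightarrow> nat \<Rightarrow> ((nat \<times> nat) set list \<Rightarrow> (nat \<times> nat) set list \<Rightarrow> 'm) \<Rightarrow>
    ((nat \<times> nat) set list \<Rightarrow> (nat \<times> nat) set list \<Rightarrow> 'm)" where
  "hface p q i F = NXmap (p - 1) q (coface i) id F"

definition vface :: "nat \<Rightarrow> nat \<Rightarrow> nat \<Rightarrow> ((nat \<times> nat) set list \<Rightarrow> (nat \<times> nat) set list \<Rightarrow> 'm) \<Rightarrow>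
    ((nat \<times> nat) set list \<Rightarrow> (nat \<times> nat) set list \<Rightarrow> 'm)" where
  "vface p q j F = NXmap p (q - 1) id (coface j) F"

text \<open>A map f of simplicial sets E \<rightarrow> B (given by q-simplices E q, faces dE q j : E_q \<rightarrow> E_{q-1})
  is a Kan fibration iff it has the right lifting property against all horn inclusions
  \<open>\<Lambda>\<^sup>k[q] \<rightarrow> \<Delta>[q]\<close>, q \<ge> 1; maps out of the horn are compatible families of faces.\<close>
definition kan_fibration :: "(nat \<Rightarrow> 'e set) \<Rightarrow> (nat \<Rightarrow> nat \<Rightarrow> 'e \<Rightarrow> 'e) \<Rightarrow>
    (nat \<Rightarrow> 'b set) \<Rightarrow> (nat \<Rightarrow> nat \<Rightarrow> 'b \<Rightarrow> 'b) \<Rightarrow> (nat \<Rightarrow> 'e \<Rightarrow> 'b) \<Rightarrow> bool" where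
  "kan_fibration E dE B dB f \<longleftrightarrow>
     (\<forall>q k y b. 1 \<le> q \<longrightarrow> k \<le> q \<longrightarrow>
        (\<forall>j\<le>q. j \<noteq> k \<longrightarrow> y j \<in> E (q - 1)) \<longrightarrow>
        (\<forall>i j. i < j \<longrightarrow> j \<le> q \<longrightarrow> i \<noteq> k \<longrightarrow> j \<noteq> k \<longrightarrow>
            dE (q - 1) i (y j) = dE (q - 1) (j - 1) (y i)) \<longrightarrow>
        b \<in> B q \<longrightarrow>
        (\<forall>j\<le>q. j \<noteq> k \<longrightarrow> dB q j b = f (q - 1) (y j)) \<longrightarrow>
        (\<exists>x\<in>E q. (\<forall>j\<le>q. j \<noteq> k \<longrightarrow> dE q j x = y j) \<and> f q x = b))"

text \<open>Matching object \<open>(M_p X)_q\<close> of the simplicial object \<open>p \<mapsto> (N_xi M)_{p\<bullet>}\<close>: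
  a point for p = 0, and for p \<ge> 1 the compatible families \<open>(x_0,\<dots>,x_p)\<close> of
  elements of \<open>(N_xi M)_{p-1,q}\<close> with \<open>d_i x_j = d_{j-1} x_i\<close> for i < j.\<close>
definition Match :: "('o, 'm) relcat \<Rightarrow> nat \<Rightarrow> nat \<Rightarrow>
    (nat \<Rightarrow> (nat \<times> nat) set list \<Rightarrow> (nat \<times> nat) set list \<Rightarrow> 'm) set" where
  "Match M p q = (if p = 0 then {\<lambda>i. undefined} else
     {x. (\<forall>i\<le>p. x i \<in> NX M (p - 1) q) \<and> (\<forall>i>p. x i = undefined) \<and>
         (\<forall>i j. i < j \<longrightarrow> j \<le> p \<longrightarrow> hface (p - 1) q i (x j) = hface (p - 1) q (j - 1) (x i))})"

definition match_face :: "nat \<Rightarrow> nat \<Rightarrow> nat \<Rightarrow>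
    (nat \<Rightarrow> (nat \<times> nat) set list \<Rightarrow> (nat \<times> nat) set list \<Rightarrow> 'm) \<Rightarrow>
    (nat \<Rightarrow> (nat \<times> nat) set list \<Rightarrow> (nat \<times> nat) set list \<Rightarrow> 'm)" where
  "match_face p q j x = (if p = 0 then (\<lambda>i. undefined) else
     (\<lambda>i. if i \<le> p then vface (p - 1) q j (x i) else undefined))"

definition match_map :: "nat \<Rightarrow> nat \<Rightarrow> ((nat \<times> nat) set list \<Rightarrow> (nat \<times> nat) set list \<Rightarrow> 'm) \<Rightarrow>
    (nat \<Rightarrow> (nat \<times> nat) set list \<Rightarrow> (nat \<times> nat) set list \<Rightarrow> 'm)" where
  "match_map p q F = (if p = 0 then (\<lambda>i. undefined) else
     (\<lambda>i. if i \<le> p then hface p q i F else undefined))"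

definition reedy_fibrant_NX :: "('o, 'm) relcat \<Rightarrow> bool" where
  "reedy_fibrant_NX M \<longleftrightarrow>
     (\<forall>p. kan_fibration (NX M p) (vface p) (Match M p) (match_face p) (match_map p))"

definition in_subcomplex :: "nat \<Rightarrow> nat \<Rightarrow> nat \<Rightarrow> (nat \<times> nat) set \<Rightarrow> bool" where
  "in_subcomplex k n m S \<longleftrightarrow>
     (fst ` S \<noteq> {0..n} \<and> fst ` S \<noteq> {0..n} - {k}) \<or> snd ` S \<noteq> {0..m}"

definition Skmn :: "nat \<Rightarrow> nat \<Rightarrow> nat \<Rightarrow> (nat \<times> nat) set list relposet" where
  "Skmn k n m = \<lparr> pcar = {As \<in> pcar (xi (hat_check n m)). in_subcomplex k n m (last As)},
                  ple = ple (xi (hat_check n m)),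
                  pwe = pwe (xi (hat_check n m)) \<rparr>"

end

theory Submission
  imports Defs
begin

text \<open>An \<open>n\<close>-dimensional horn in the matching map \<open>(N_\<xi>M)_{m,\<bullet>} \<rightarrow> M_m(N_\<xi>M)\<close>, i.e. the
  data of a Kan lifting problem, is a family of relative functors on \<open>\<xi>\<close> of the faces
  \<open>\<partial>_j\<Delta>[n] \<times> \<Delta>[m]\<close> (\<open>j \<noteq> k\<close>) and \<open>\<Delta>[n] \<times> \<partial>_i\<Delta>[m]\<close> of the grid, compatible on the faces
  of codimension two. The top set of every chain of \<open>S_{k,n,m}\<close> lies in one of these faces, and
  the chains supported in a face form a down-closed part of \<open>S_{k,n,m}\<close>; so such a family glues to
  one relative functor on \<open>S_{k,n,m}\<close>, and every relative functor on \<open>S_{k,n,m}\<close> arises this way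
  from its restrictions to the faces. After swapping the two coordinates of the grid, fillers of
  the horn are exactly the extensions of that functor to \<open>\<xi>(hat n \<times> check m)\<close>.\<close>

section \<open>Images of chains\<close>

lemma remdups_adj_idem [simp]: "remdups_adj (remdups_adj xs) = remdups_adj xs"
  using distinct_adj_altdef distinct_adj_remdups_adj by blast

lemma remdups_adj_Cons_remdups_adj:
  "remdups_adj (a # remdups_adj zs) = remdups_adj (a # zs)"
proof (cases zs)
  case Nil then show ?thesis by simp
next
  case (Cons b zs')
  have e: "remdups_adj zs = b # tl (remdups_adj (b # zs'))"
    using Cons remdups_adj_Cons_alt by metis
  show ?thesis
  proof (cases "a = b")
    case True
    then show ?thesis using Cons e
      by (metis remdups_adj.simps(3) remdups_adj_idem)
  next
    case False
    then show ?thesis using Cons e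
      by (metis remdups_adj.simps(3) remdups_adj_idem)
  qed
qed

lemma remdups_adj_map_remdups_adj:
  "remdups_adj (map F (remdups_adj xs)) = remdups_adj (map F xs)"
proof (induction xs rule: remdups_adj.induct)
  case 1 then show ?case by simp
next
  case (2 x) then show ?case by simp
next
  case (3 x y xs)
  show ?case
  proof (cases "x = y")
    case True
    then show ?thesis using 3(1) by simp
  next
    case False
    have "remdups_adj (map F (remdups_adj (x # y # xs)))
        = remdups_adj (F x # map F (remdups_adj (y # xs)))" using False by simp
    also have "\<dots> = remdups_adj (F x # remdups_adj (map F (remdups_adj (y # xs))))"
      by (simp add: remdups_adj_Cons_remdups_adj)
    also have "\<dots> = remdups_adj (F x # remdups_adj (map F (y # xs)))"
      using 3(2) False by simp
    also have "\<dots> = remdups_adj (map F (x # y # xs))"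
      by (simp only: remdups_adj_Cons_remdups_adj list.map)
    finally show ?thesis .
  qed
qed

lemma sorted_wrt_psubset_subset_last:
  "sorted_wrt (\<subset>) As \<Longrightarrow> A \<in> set As \<Longrightarrow> A \<subseteq> last As"
proof (induction As)
  case (Cons B As)
  show ?case
  proof (cases "As = []")
    case False
    then have "last As \<in> set As" "last (B # As) = last As" by simp_all
    then show ?thesis using Cons by (metis psubset_imp_subset set_ConsD sorted_wrt.simps(2))
  qed (use Cons.prems in simp)
qed simp

lemma ximg_comp: "ximg f (ximg g As) = ximg (f \<circ> g) As"
  unfolding ximg_def by (simp add: remdups_adj_map_remdups_adj o_def image_image)

lemma ximg_cong: "(\<And>x. x \<in> \<Union>(set As) \<Longrightarrow> f x = g x) \<Longrightarrow> ximg f As = ximg g As"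
  unfolding ximg_def by (intro arg_cong[where f = remdups_adj] map_cong image_cong refl) blast

lemma set_ximg [simp]: "set (ximg f As) = (\<lambda>A. f ` A) ` set As"
  by (simp add: ximg_def)

lemma hd_ximg [simp]: "As \<noteq> [] \<Longrightarrow> hd (ximg f As) = f ` hd As"
  by (simp add: ximg_def hd_map)

lemma last_ximg [simp]: "As \<noteq> [] \<Longrightarrow> last (ximg f As) = f ` last As"
  by (simp add: ximg_def last_map)

lemma ximg_eq_Nil_iff [simp]: "ximg f As = [] \<longleftrightarrow> As = []"
  by (simp add: ximg_def)

lemma sorted_wrt_psubset_distinct: "sorted_wrt (\<subset>) As \<Longrightarrow> distinct As"
  by (induction As) auto

lemma ximg_id: "sorted_wrt (\<subset>) As \<Longrightarrow> ximg id As = As"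
  by (simp add: ximg_def remdups_adj_distinct sorted_wrt_psubset_distinct)

lemma sorted_wrt_psubset_ximg:
  assumes sorted: "sorted_wrt (\<subset>) As" and inj: "inj_on f (\<Union>(set As))"
  shows "sorted_wrt (\<subset>) (ximg f As)"
proof -
  have "f ` A \<subset> f ` B" if "A \<in> set As" "B \<in> set As" "A \<subset> B" for A B
  proof -
    have "inj_on f B" using inj_on_subset[OF inj] \<open>B \<in> set As\<close> by blast
    then show ?thesis using \<open>A \<subset> B\<close> inj_on_image_eq_iff[of f B A B] by blast
  qed
  then have "sorted_wrt (\<subset>) (map ((`) f) As)"
    unfolding sorted_wrt_map by (rule sorted_wrt_mono_rel[OF _ sorted])
  then show ?thesis
    by (simp add: ximg_def remdups_adj_distinct sorted_wrt_psubset_distinct)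
qed

section \<open>Chains in the grid\<close>

lemma grid_le_refl [simp]: "grid_le x x"
  by (simp add: grid_le_def)

lemma grid_le_antisym: "grid_le x y \<Longrightarrow> grid_le y x \<Longrightarrow> x = y"
  by (simp add: grid_le_def prod_eq_iff)

definition grid_embedding :: "(nat \<times> nat) set \<Rightarrow> (nat \<times> nat \<Rightarrow> nat \<times> nat) \<Rightarrow> bool" where
  "grid_embedding U r \<longleftrightarrow> (\<forall>x\<in>U. \<forall>y\<in>U. grid_le (r x) (r y) \<longleftrightarrow> grid_le x y)"

lemma grid_embedding_subset: "grid_embedding U r \<Longrightarrow> V \<subseteq> U \<Longrightarrow> grid_embedding V r"
  by (auto simp: grid_embedding_def)

lemma grid_embedding_inj_on: "grid_embedding U r \<Longrightarrow> inj_on r U"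
  unfolding grid_embedding_def by (metis grid_le_antisym grid_le_refl inj_onI)

lemma chain_min_grid_le_eq:
  "x \<in> A \<Longrightarrow> \<forall>y\<in>A. grid_le x y \<Longrightarrow> chain_min grid_le A = x"
  unfolding chain_min_def by (rule the_equality) (auto intro: grid_le_antisym)

lemma chain_min_grid_le:
  assumes "finite A" "A \<noteq> {}" and total: "\<forall>x\<in>A. \<forall>y\<in>A. grid_le x y \<or> grid_le y x"
  shows "chain_min grid_le A \<in> A \<and> (\<forall>y\<in>A. grid_le (chain_min grid_le A) y)"
proof -
  \<comment> \<open>an element of least coordinate sum is below every comparable element\<close>
  obtain x where x: "x \<in> A" "\<forall>y\<in>A. fst x + snd x \<le> fst y + snd y"
    using arg_min_if_finite[OF assms(1,2), of "\<lambda>z. fst z + snd z"] by (meson not_le)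
  have least: "\<forall>y\<in>A. grid_le x y"
    using total x by (fastforce simp: grid_le_def)
  then show ?thesis using x(1) chain_min_grid_le_eq[OF x(1) least] by simp
qed

lemma chain_min_grid_le_image:
  assumes "finite A" "A \<noteq> {}" "\<forall>x\<in>A. \<forall>y\<in>A. grid_le x y \<or> grid_le y x"
    and emb: "grid_embedding A r"
  shows "chain_min grid_le (r ` A) = r (chain_min grid_le A)"
proof (rule chain_min_grid_le_eq)
  have min: "chain_min grid_le A \<in> A" "\<forall>y\<in>A. grid_le (chain_min grid_le A) y"
    using chain_min_grid_le[OF assms(1-3)] by simp_all
  then show "r (chain_min grid_le A) \<in> r ` A" by simp
  show "\<forall>y\<in>r ` A. grid_le (r (chain_min grid_le A)) y"
    using min emb by (auto simp: grid_embedding_def)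
qed

lemma xi_simps [simp]:
  "pcar (xi P) = {As. xi_chain P As}"
  "ple (xi P) = (\<lambda>Bs As. set Bs \<subseteq> set As)"
  "pwe (xi P) = (\<lambda>Bs As. set Bs \<subseteq> set As \<and>
                   pwe P (chain_min (ple P) (hd Bs)) (chain_min (ple P) (hd As)))"
  by (simp_all add: xi_def)

lemma xi_chain_subset_last: "xi_chain P As \<Longrightarrow> A \<in> set As \<Longrightarrow> A \<subseteq> last As"
  unfolding xi_chain_def using sorted_wrt_psubset_subset_last by blast

lemma xi_chain_last_subset: "xi_chain P As \<Longrightarrow> last As \<subseteq> pcar P"
  unfolding xi_chain_def by simp

lemma xi_chain_ximg:
  assumes As: "xi_chain P0 As" and le: "ple P0 = grid_le" "ple P = grid_le"
    and U: "last As \<subseteq> U" and emb: "grid_embedding U r" and into: "r ` U \<subseteq> pcar P"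
  shows "xi_chain P (ximg r As)"
proof -
  have AU: "A \<subseteq> U" if "A \<in> set As" for A
    using xi_chain_subset_last[OF As that] U by blast
  have "\<Union>(set As) \<subseteq> U" using AU by blast
  then have inj: "inj_on r (\<Union>(set As))"
    using inj_on_subset[OF grid_embedding_inj_on[OF emb]] by blast
  have sorted: "sorted_wrt (\<subset>) As" and elems: "\<forall>A\<in>set As. A \<noteq> {} \<and> finite A \<and>
      (\<forall>x\<in>A. \<forall>y\<in>A. grid_le x y \<or> grid_le y x)" and "As \<noteq> []"
    using As le by (simp_all add: xi_chain_def)
  show ?thesis
    unfolding xi_chain_def
  proof (intro conjI)
    show "ximg r As \<noteq> []" using \<open>As \<noteq> []\<close> by simp
    show "sorted_wrt (\<subset>) (ximg r As)" by (rule sorted_wrt_psubset_ximg[OF sorted inj])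
    show "\<forall>B\<in>set (ximg r As). B \<noteq> {} \<and> finite B \<and> B \<subseteq> pcar P \<and>
      (\<forall>x\<in>B. \<forall>y\<in>B. ple P x y \<or> ple P y x)"
    proof
      fix B assume "B \<in> set (ximg r As)"
      then obtain A where A: "A \<in> set As" "B = r ` A" by auto
      have total: "\<forall>x\<in>A. \<forall>y\<in>A. grid_le x y \<or> grid_le y x" using elems A(1) by blast
      have "\<forall>x\<in>B. \<forall>y\<in>B. grid_le x y \<or> grid_le y x"
      proof (intro ballI)
        fix x y assume "x \<in> B" "y \<in> B"
        then obtain a b where "a \<in> A" "b \<in> A" "x = r a" "y = r b" using A(2) by blast
        with total AU[OF A(1)] emb show "grid_le x y \<or> grid_le y x"
          unfolding grid_embedding_def by (meson subsetD)
      qed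
      moreover have "B \<subseteq> pcar P" using A AU[OF A(1)] into by blast
      ultimately show "B \<noteq> {} \<and> finite B \<and> B \<subseteq> pcar P \<and>
          (\<forall>x\<in>B. \<forall>y\<in>B. ple P x y \<or> ple P y x)"
        using elems A le by simp
    qed
  qed
qed

section \<open>Pulling back and gluing relative functors\<close>

definition full_subposet :: "'p relposet \<Rightarrow> 'p set \<Rightarrow> 'p relposet" where
  "full_subposet P A = P\<lparr>pcar := pcar P \<inter> A\<rparr>"

lemma full_subposet_simps [simp]:
  "pcar (full_subposet P A) = pcar P \<inter> A"
  "ple (full_subposet P A) = ple P"
  "pwe (full_subposet P A) = pwe P"
  by (simp_all add: full_subposet_def)

lemma full_subposet_UNIV [simp]: "full_subposet P UNIV = P"
  by (simp add: full_subposet_def)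

lemma full_subposet_full_subposet [simp]:
  "full_subposet (full_subposet P A) B = full_subposet P (A \<inter> B)"
  by (simp add: full_subposet_def Int_assoc)

lemma relfunD:
  assumes "relfun P M F"
  shows "\<And>p q. p \<in> pcar P \<Longrightarrow> q \<in> pcar P \<Longrightarrow> ple P p q \<Longrightarrow>
           F p q \<in> Ar M \<and> Dom M (F p q) = Dom M (F p p) \<and> Cod M (F p q) = Dom M (F q q)"
    and "\<And>p. p \<in> pcar P \<Longrightarrow> F p p = Idm M (Dom M (F p p))"
    and "\<And>p q r. p \<in> pcar P \<Longrightarrow> q \<in> pcar P \<Longrightarrow> r \<in> pcar P \<Longrightarrow> ple P p q \<Longrightarrow> ple P q r \<Longrightarrow>
           Comp M (F q r) (F p q) = F p r"
    and "\<And>p q. p \<in> pcar P \<Longrightarrow> q \<in> pcar P \<Longrightarrow> pwe P p q \<Longrightarrow> F p q \<in> We M"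
    and "\<And>p q. \<not> (p \<in> pcar P \<and> q \<in> pcar P \<and> ple P p q) \<Longrightarrow> F p q = undefined"
  using assms unfolding relfun_def by blast+

definition xi_pullback :: "'q set list relposet \<Rightarrow> ('q \<Rightarrow> 'p) \<Rightarrow>
    ('p set list \<Rightarrow> 'p set list \<Rightarrow> 'm) \<Rightarrow> 'q set list \<Rightarrow> 'q set list \<Rightarrow> 'm" where
  "xi_pullback R r Z Bs As =
     (if Bs \<in> pcar R \<and> As \<in> pcar R \<and> set Bs \<subseteq> set As then Z (ximg r Bs) (ximg r As) else undefined)"

lemma relfun_precomp:
  assumes Z: "relfun T M Z"
    and refl: "\<And>p. p \<in> pcar R \<Longrightarrow> ple R p p"
    and trans: "\<And>p q s. p \<in> pcar R \<Longrightarrow> q \<in> pcar R \<Longrightarrow> s \<in> pcar R \<Longrightarrow>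
                  ple R p q \<Longrightarrow> ple R q s \<Longrightarrow> ple R p s"
    and wele: "\<And>p q. p \<in> pcar R \<Longrightarrow> q \<in> pcar R \<Longrightarrow> pwe R p q \<Longrightarrow> ple R p q"
    and car: "\<And>p. p \<in> pcar R \<Longrightarrow> \<phi> p \<in> pcar T"
    and mono: "\<And>p q. p \<in> pcar R \<Longrightarrow> q \<in> pcar R \<Longrightarrow> ple R p q \<Longrightarrow> ple T (\<phi> p) (\<phi> q)"
    and we: "\<And>p q. p \<in> pcar R \<Longrightarrow> q \<in> pcar R \<Longrightarrow> pwe R p q \<Longrightarrow> pwe T (\<phi> p) (\<phi> q)"
  shows "relfun R M (\<lambda>p q. if p \<in> pcar R \<and> q \<in> pcar R \<and> ple R p q then Z (\<phi> p) (\<phi> q) else undefined)"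
proof -
  let ?H = "\<lambda>p q. if p \<in> pcar R \<and> q \<in> pcar R \<and> ple R p q then Z (\<phi> p) (\<phi> q) else undefined"
  have "?H p q \<in> Ar M \<and> Dom M (?H p q) = Dom M (?H p p) \<and> Cod M (?H p q) = Dom M (?H q q)"
    if "p \<in> pcar R" "q \<in> pcar R" "ple R p q" for p q
    using relfunD(1)[OF Z car[OF that(1)] car[OF that(2)] mono[OF that]] that refl by simp
  moreover have "?H p p = Idm M (Dom M (?H p p))" if "p \<in> pcar R" for p
    using relfunD(2)[OF Z car[OF that]] that refl by simp
  moreover have "Comp M (?H q s) (?H p q) = ?H p s"
    if "p \<in> pcar R" "q \<in> pcar R" "s \<in> pcar R" "ple R p q" "ple R q s" for p q s
    using relfunD(3)[OF Z car[OF that(1)] car[OF that(2)] car[OF that(3)]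
        mono[OF that(1,2,4)] mono[OF that(2,3,5)]] that trans[OF that] by simp
  moreover have "?H p q \<in> We M" if "p \<in> pcar R" "q \<in> pcar R" "pwe R p q" for p q
    using relfunD(4)[OF Z car[OF that(1)] car[OF that(2)] we[OF that]] that wele[OF that] by simp
  moreover have "?H p q = undefined" if "\<not> (p \<in> pcar R \<and> q \<in> pcar R \<and> ple R p q)" for p q
    using that by (simp only: if_False)
  ultimately show ?thesis unfolding relfun_def by blast
qed

lemma xi_pullback_apply:
  "Bs \<in> pcar R \<Longrightarrow> As \<in> pcar R \<Longrightarrow> set Bs \<subseteq> set As \<Longrightarrow>
   xi_pullback R r Z Bs As = Z (ximg r Bs) (ximg r As)"
  by (simp add: xi_pullback_def)

lemma relfun_xi_pullback:
  assumes Z: "relfun (full_subposet (xi P) B) M Z"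
    and le: "ple P = grid_le" "ple P0 = grid_le"
    and maps: "\<And>As. As \<in> pcar (xi P0) \<inter> A \<Longrightarrow> ximg r As \<in> B"
    and U: "\<And>As. As \<in> pcar (xi P0) \<inter> A \<Longrightarrow> last As \<subseteq> U"
    and emb: "grid_embedding U r" and into: "r ` U \<subseteq> pcar P"
    and we: "\<And>x y. x \<in> U \<Longrightarrow> y \<in> U \<Longrightarrow> pwe P0 x y \<Longrightarrow> pwe P (r x) (r y)"
  shows "relfun (full_subposet (xi P0) A) M (xi_pullback (full_subposet (xi P0) A) r Z)"
proof -
  let ?R = "full_subposet (xi P0) A" and ?T = "full_subposet (xi P) B"
  have img: "ximg r As \<in> pcar ?T" if "As \<in> pcar ?R" for As
    using xi_chain_ximg[OF _ le(2,1) U emb into] maps that by auto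
  \<comment> \<open>weak equivalences of \<open>\<xi>\<close> only compare minima of first sets, which embeddings preserve\<close>
  have min: "chain_min grid_le (hd (ximg r As)) = r (chain_min grid_le (hd As)) \<and>
      chain_min grid_le (hd As) \<in> U" if "As \<in> pcar ?R" for As
  proof -
    have As: "xi_chain P0 As" "last As \<subseteq> U" using that U by auto
    then have "As \<noteq> []" by (simp add: xi_chain_def)
    then have hd: "hd As \<in> set As" by simp
    then have "hd As \<subseteq> U" using xi_chain_subset_last[OF As(1)] As(2) by blast
    moreover have "finite (hd As) \<and> hd As \<noteq> {} \<and>
        (\<forall>x\<in>hd As. \<forall>y\<in>hd As. grid_le x y \<or> grid_le y x)"
      using As(1) hd unfolding xi_chain_def le(2) by blast
    ultimately show ?thesis
      using chain_min_grid_le_image[OF _ _ _ grid_embedding_subset[OF emb]] chain_min_grid_le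
        \<open>As \<noteq> []\<close> by auto
  qed
  have weq: "pwe ?T (ximg r Bs) (ximg r As)"
    if "Bs \<in> pcar ?R" "As \<in> pcar ?R" "pwe ?R Bs As" for Bs As
    using that min[OF that(1)] min[OF that(2)] we le by auto
  have le_img: "ple ?T (ximg r Bs) (ximg r As)" if "set Bs \<subseteq> set As" for Bs As
    using that by auto
  have "relfun ?R M (\<lambda>p q. if p \<in> pcar ?R \<and> q \<in> pcar ?R \<and> ple ?R p q
                            then Z (ximg r p) (ximg r q) else undefined)"
    by (rule relfun_precomp[OF Z]) (use img weq in auto)
  then show ?thesis
    by (simp add: xi_pullback_def[abs_def])
qed

lemma relfun_xi_pullback_xi:
  assumes "relfun (full_subposet (xi P) B) M Z" "ple P = grid_le" "ple P0 = grid_le"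
    and "\<And>As. xi_chain P0 As \<Longrightarrow> ximg r As \<in> B"
    and "grid_embedding (pcar P0) r" "r ` pcar P0 \<subseteq> pcar P"
    and "\<And>x y. x \<in> pcar P0 \<Longrightarrow> y \<in> pcar P0 \<Longrightarrow> pwe P0 x y \<Longrightarrow> pwe P (r x) (r y)"
  shows "relfun (xi P0) M (xi_pullback (xi P0) r Z)"
  using relfun_xi_pullback[OF assms(1-3), of UNIV r "pcar P0"] assms(4-)
  by (simp add: xi_chain_last_subset)

lemma xi_pullback_comp:
  assumes "\<And>As. As \<in> pcar R \<Longrightarrow> ximg g As \<in> pcar R'"
  shows "xi_pullback R g (xi_pullback R' f Z) = xi_pullback R (f \<circ> g) Z"
  using assms by (auto simp: xi_pullback_def fun_eq_iff ximg_comp image_mono)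

lemma ximg_left_inverse:
  assumes "xi_chain P As" "\<And>x. x \<in> pcar P \<Longrightarrow> r (e x) = x"
  shows "ximg r (ximg e As) = As"
proof -
  have "ximg (r \<circ> e) As = ximg id As"
    using assms by (intro ximg_cong) (auto simp: xi_chain_def)
  then show ?thesis
    using assms(1) by (simp add: ximg_comp ximg_id xi_chain_def)
qed

lemma xi_pullback_eqI:
  assumes Z: "relfun (xi P) M Z"
    and eq: "\<And>Ds Cs. Ds \<in> pcar (xi P) \<Longrightarrow> Cs \<in> pcar (xi P) \<Longrightarrow> set Ds \<subseteq> set Cs \<Longrightarrow>
               G (ximg e Ds) (ximg e Cs) = Z Ds Cs"
  shows "xi_pullback (xi P) e G = Z"
  using eq relfunD(5)[OF Z] by (auto simp: xi_pullback_def fun_eq_iff)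

lemma xi_pullback_eq_on_region:
  assumes eq: "xi_pullback (xi P1) f Z = xi_pullback (xi P1) g Z'"
    and le: "ple P0 = grid_le" "ple P1 = grid_le"
    and As: "xi_chain P0 As" "xi_chain P0 Bs" "set Bs \<subseteq> set As" "last As \<subseteq> U"
    and t: "grid_embedding U t" "t ` U \<subseteq> pcar P1"
    and f': "\<And>x. x \<in> U \<Longrightarrow> f' x = f (t x)" and g': "\<And>x. x \<in> U \<Longrightarrow> g' x = g (t x)"
  shows "Z (ximg f' Bs) (ximg f' As) = Z' (ximg g' Bs) (ximg g' As)"
proof -
  have AU: "\<Union>(set As) \<subseteq> U" using xi_chain_subset_last[OF As(1)] As(4) by blast
  then have BU: "\<Union>(set Bs) \<subseteq> U" using As(3) by blast
  have "Bs \<noteq> []" using As(2) by (simp add: xi_chain_def)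
  then have "last Bs \<subseteq> U" using BU last_in_set by blast
  then have chains: "ximg t As \<in> pcar (xi P1)" "ximg t Bs \<in> pcar (xi P1)"
    using xi_chain_ximg[OF _ le _ t] As by auto
  have "ximg f' Cs = ximg f (ximg t Cs) \<and> ximg g' Cs = ximg g (ximg t Cs)"
    if "\<Union>(set Cs) \<subseteq> U" for Cs
    unfolding ximg_comp using that f' g' by (auto intro!: ximg_cong)
  then show ?thesis
    using fun_cong[OF fun_cong[OF eq, of "ximg t Bs"], of "ximg t As"] chains As(3) AU BU
    by (simp add: xi_pullback_def image_mono)
qed

definition glue :: "'p relposet \<Rightarrow> 'f set \<Rightarrow> ('f \<Rightarrow> 'p set) \<Rightarrow> ('f \<Rightarrow> 'p \<Rightarrow> 'p \<Rightarrow> 'm) \<Rightarrow>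
    'p \<Rightarrow> 'p \<Rightarrow> 'm" where
  "glue S \<Phi> C W a b =
     (if a \<in> pcar S \<and> b \<in> pcar S \<and> ple S a b then W (SOME f. f \<in> \<Phi> \<and> b \<in> C f) a b else undefined)"

lemma glue_eq:
  assumes cons: "\<And>f g a b. f \<in> \<Phi> \<Longrightarrow> g \<in> \<Phi> \<Longrightarrow> a \<in> pcar S \<Longrightarrow> b \<in> pcar S \<inter> C f \<inter> C g \<Longrightarrow>
                   ple S a b \<Longrightarrow> W f a b = W g a b"
    and "f \<in> \<Phi>" "a \<in> pcar S" "b \<in> pcar S \<inter> C f" "ple S a b"
  shows "glue S \<Phi> C W a b = W f a b"
proof -
  define g where "g = (SOME f. f \<in> \<Phi> \<and> b \<in> C f)"
  have g: "g \<in> \<Phi> \<and> b \<in> C g"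
    unfolding g_def by (rule someI_ex) (use assms in blast)
  have "W g a b = W f a b"
    by (rule cons) (use assms g in auto)
  then show ?thesis
    using assms(3-5) by (simp add: glue_def g_def[symmetric])
qed

lemma relfun_glue:
  assumes charts: "\<And>f. f \<in> \<Phi> \<Longrightarrow> relfun (full_subposet S (C f)) M (W f)"
    and cover: "pcar S \<subseteq> (\<Union>f\<in>\<Phi>. C f)"
    and down: "\<And>f a b. f \<in> \<Phi> \<Longrightarrow> a \<in> pcar S \<Longrightarrow> b \<in> pcar S \<inter> C f \<Longrightarrow> ple S a b \<Longrightarrow> a \<in> C f"
    and cons: "\<And>f g a b. f \<in> \<Phi> \<Longrightarrow> g \<in> \<Phi> \<Longrightarrow> a \<in> pcar S \<Longrightarrow> b \<in> pcar S \<inter> C f \<inter> C g \<Longrightarrow>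
                 ple S a b \<Longrightarrow> W f a b = W g a b"
    and refl: "\<And>p. p \<in> pcar S \<Longrightarrow> ple S p p"
    and trans: "\<And>p q s. p \<in> pcar S \<Longrightarrow> q \<in> pcar S \<Longrightarrow> s \<in> pcar S \<Longrightarrow>
                  ple S p q \<Longrightarrow> ple S q s \<Longrightarrow> ple S p s"
    and wele: "\<And>p q. p \<in> pcar S \<Longrightarrow> q \<in> pcar S \<Longrightarrow> pwe S p q \<Longrightarrow> ple S p q"
  shows "relfun S M (glue S \<Phi> C W)"
proof -
  let ?G = "glue S \<Phi> C W"
  have G: "?G a b = W f a b" if "f \<in> \<Phi>" "a \<in> pcar S" "b \<in> pcar S \<inter> C f" "ple S a b" for f a b
    using glue_eq[where \<Phi> = \<Phi> and S = S and C = C and W = W, OF cons that] .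
  have chart: "\<exists>f\<in>\<Phi>. q \<in> C f \<and> (\<forall>p\<in>pcar S. ple S p q \<longrightarrow> p \<in> C f)" if "q \<in> pcar S" for q
    using cover down that by blast
  have "?G p q \<in> Ar M \<and> Dom M (?G p q) = Dom M (?G p p) \<and> Cod M (?G p q) = Dom M (?G q q)"
    if pq: "p \<in> pcar S" "q \<in> pcar S" "ple S p q" for p q
  proof -
    obtain f where f: "f \<in> \<Phi>" "q \<in> C f" "p \<in> C f" using chart[OF pq(2)] pq by blast
    have "?G p q = W f p q" "?G p p = W f p p" "?G q q = W f q q"
      using G[OF f(1)] pq f refl by simp_all
    with relfunD(1)[OF charts[OF f(1)], of p q] show ?thesis using pq f by simp
  qed
  moreover have "?G p p = Idm M (Dom M (?G p p))" if p: "p \<in> pcar S" for p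
  proof -
    obtain f where f: "f \<in> \<Phi>" "p \<in> C f" using chart[OF p] by blast
    have "?G p p = W f p p" using G[OF f(1)] p f refl by simp
    with relfunD(2)[OF charts[OF f(1)], of p] show ?thesis using p f by simp
  qed
  moreover have "Comp M (?G q s) (?G p q) = ?G p s"
    if pqs: "p \<in> pcar S" "q \<in> pcar S" "s \<in> pcar S" "ple S p q" "ple S q s" for p q s
  proof -
    obtain f where f: "f \<in> \<Phi>" "s \<in> C f" "q \<in> C f" using chart[OF pqs(3)] pqs by blast
    then have "p \<in> C f" using chart pqs down by blast
    have "ple S p s" using trans pqs by blast
    have "?G q s = W f q s" "?G p q = W f p q" "?G p s = W f p s"
      using G[OF f(1)] pqs f \<open>p \<in> C f\<close> \<open>ple S p s\<close> by simp_all
    with relfunD(3)[OF charts[OF f(1)], of p q s] show ?thesis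
      using pqs f \<open>p \<in> C f\<close> by simp
  qed
  moreover have "?G p q \<in> We M" if pq: "p \<in> pcar S" "q \<in> pcar S" "pwe S p q" for p q
  proof -
    have "ple S p q" using wele pq by blast
    obtain f where f: "f \<in> \<Phi>" "q \<in> C f" "p \<in> C f" using chart[OF pq(2)] pq \<open>ple S p q\<close> by blast
    have "?G p q = W f p q" using G[OF f(1)] pq f \<open>ple S p q\<close> by simp
    with relfunD(4)[OF charts[OF f(1)], of p q] show ?thesis using pq f by simp
  qed
  moreover have "?G p q = undefined" if "\<not> (p \<in> pcar S \<and> q \<in> pcar S \<and> ple S p q)" for p q
    using that unfolding glue_def by (simp only: if_False)
  ultimately show ?thesis unfolding relfun_def by blast
qed

section \<open>Faces of the grid\<close>

definition coface_retr :: "nat \<Rightarrow> nat \<Rightarrow> nat" where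
  "coface_retr j x = (if x < j then x else x - 1)"

lemma coface_le_coface_iff [simp]: "coface j x \<le> coface j y \<longleftrightarrow> x \<le> y"
  by (auto simp: coface_def)

lemma coface_neq [simp]: "coface j x \<noteq> j" "j \<noteq> coface j x"
  by (auto simp: coface_def)

lemma coface_retr_coface [simp]: "coface_retr j (coface j x) = x"
  by (auto simp: coface_def coface_retr_def)

lemma coface_coface_retr: "x \<noteq> j \<Longrightarrow> coface j (coface_retr j x) = x"
  by (auto simp: coface_def coface_retr_def)

lemma coface_retr_le_iff: "x \<noteq> j \<Longrightarrow> y \<noteq> j \<Longrightarrow> coface_retr j x \<le> coface_retr j y \<longleftrightarrow> x \<le> y"
  by (auto simp: coface_retr_def)

lemma coface_le: "x \<le> N - 1 \<Longrightarrow> 1 \<le> N \<Longrightarrow> coface j x \<le> N"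
  by (auto simp: coface_def)

lemma coface_coface: "i < j \<Longrightarrow> coface j (coface i x) = coface i (coface (j - 1) x)"
  by (auto simp: coface_def)

lemma coface_retr_coface_retr:
  assumes "x \<noteq> j" "x \<noteq> j'" "j < j'"
  shows "coface j (coface_retr j (coface_retr j' x)) = coface_retr j' x"
    and "coface (j' - 1) (coface_retr j (coface_retr j' x)) = coface_retr j x"
    and "y \<noteq> j \<Longrightarrow> y \<noteq> j' \<Longrightarrow>
         coface_retr j (coface_retr j' x) \<le> coface_retr j (coface_retr j' y) \<longleftrightarrow> x \<le> y"
    and "x \<le> N \<Longrightarrow> j' \<le> N \<Longrightarrow> coface_retr j (coface_retr j' x) \<le> N - 1 - 1"
  using assms by (auto simp: coface_def coface_retr_def)

lemma check_hat_simps [simp]: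
  "pcar (check_hat p q) = {0..p} \<times> {0..q}" "ple (check_hat p q) = grid_le"
  "pwe (check_hat p q) = (\<lambda>x y. grid_le x y \<and> fst x = fst y)"
  by (simp_all add: check_hat_def)

lemma hat_check_simps [simp]:
  "pcar (hat_check n m) = {0..n} \<times> {0..m}" "ple (hat_check n m) = grid_le"
  "pwe (hat_check n m) = (\<lambda>x y. grid_le x y \<and> snd x = snd y)"
  by (simp_all add: hat_check_def)

lemma hface_eq: "hface p q i F = xi_pullback (xi (check_hat (p - 1) q)) (map_prod (coface i) id) F"
  by (simp add: hface_def NXmap_def xi_pullback_def fun_eq_iff)

lemma vface_eq: "vface p q j F = xi_pullback (xi (check_hat p (q - 1))) (map_prod id (coface j)) F"
  by (simp add: vface_def NXmap_def xi_pullback_def fun_eq_iff)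

lemma xi_chain_check_hat_map_prod:
  assumes "xi_chain (check_hat p' q') As"
    and "\<And>x y. f x \<le> f y \<longleftrightarrow> x \<le> y" "\<And>x y. g x \<le> g y \<longleftrightarrow> x \<le> y"
    and "f ` {0..p'} \<subseteq> {0..p}" "g ` {0..q'} \<subseteq> {0..q}"
  shows "xi_chain (check_hat p q) (ximg (map_prod f g) As)"
  by (rule xi_chain_ximg[OF assms(1) _ _ xi_chain_last_subset[OF assms(1)]])
    (use assms in \<open>auto simp: grid_embedding_def grid_le_def\<close>)

lemma xi_chain_coface_fst:
  "1 \<le> p \<Longrightarrow> xi_chain (check_hat (p - 1) q) As \<Longrightarrow>
   xi_chain (check_hat p q) (ximg (map_prod (coface i) id) As)"
  by (rule xi_chain_check_hat_map_prod) (auto intro!: coface_le)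

lemma xi_chain_coface_snd:
  "1 \<le> q \<Longrightarrow> xi_chain (check_hat p (q - 1)) As \<Longrightarrow>
   xi_chain (check_hat p q) (ximg (map_prod id (coface j)) As)"
  by (rule xi_chain_check_hat_map_prod) (auto intro!: coface_le)

lemma hface_xi_pullback:
  "1 \<le> p \<Longrightarrow> hface p q i (xi_pullback (xi (check_hat p q)) e F) =
     xi_pullback (xi (check_hat (p - 1) q)) (e \<circ> map_prod (coface i) id) F"
  unfolding hface_eq by (rule xi_pullback_comp) (simp add: xi_chain_coface_fst)

lemma vface_xi_pullback:
  "1 \<le> q \<Longrightarrow> vface p q j (xi_pullback (xi (check_hat p q)) e F) =
     xi_pullback (xi (check_hat p (q - 1))) (e \<circ> map_prod id (coface j)) F"
  unfolding vface_eq by (rule xi_pullback_comp) (simp add: xi_chain_coface_snd)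

text \<open>For \<open>p = 0\<close> the truncated index \<open>p - 1 = 0\<close> makes \<open>hface 0 q 0\<close> push every chain of
  \<open>[0] \<times> [q]\<close> out of the grid, so the matching condition on \<open>(N_\<xi>M)_{1,q}\<close> is vacuous.\<close>
lemma hface_zero:
  assumes "relfun (xi (check_hat 0 q)) M x"
  shows "hface 0 q 0 x = (\<lambda>_ _. undefined)"
proof -
  have "ximg (map_prod (coface 0) id) As \<notin> pcar (xi (check_hat 0 q))"
    if As: "xi_chain (check_hat 0 q) As" for As
  proof
    have "As \<noteq> []" "hd As \<noteq> {}" using As by (auto simp: xi_chain_def)
    then obtain z where "z \<in> last As"
      using xi_chain_subset_last[OF As hd_in_set] by blast
    moreover assume "ximg (map_prod (coface 0) id) As \<in> pcar (xi (check_hat 0 q))"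
    then have "last (ximg (map_prod (coface 0) id) As) \<subseteq> {0..0} \<times> {0..q}"
      using xi_chain_last_subset by fastforce
    ultimately have "map_prod (coface 0) id z \<in> {0..0} \<times> {0..q}"
      using \<open>As \<noteq> []\<close> by auto
    then show False by (cases z) (simp add: coface_def)
  qed
  then show ?thesis
    using relfunD(5)[OF assms] by (auto simp: hface_eq xi_pullback_def fun_eq_iff)
qed

text \<open>\<open>N_\<xi>M\<close> lives on \<open>check_hat m n\<close>, the grid \<open>hat_check n m\<close> has the coordinates swapped.
  \<open>face_fst j\<close> embeds \<open>check_hat m (n - 1)\<close> as the face \<open>\<partial>_j\<Delta>[n] \<times> \<Delta>[m]\<close> of \<open>hat_check n m\<close>, and
  \<open>unface_fst j\<close> inverts it on the points with first coordinate \<open>\<noteq> j\<close>; likewise \<open>face_snd i\<close>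
  embeds \<open>check_hat (m - 1) n\<close> as \<open>\<Delta>[n] \<times> \<partial>_i\<Delta>[m]\<close>.\<close>

definition face_fst :: "nat \<Rightarrow> nat \<times> nat \<Rightarrow> nat \<times> nat" where
  "face_fst j x = (coface j (snd x), fst x)"

definition face_snd :: "nat \<Rightarrow> nat \<times> nat \<Rightarrow> nat \<times> nat" where
  "face_snd i x = (snd x, coface i (fst x))"

definition unface_fst :: "nat \<Rightarrow> nat \<times> nat \<Rightarrow> nat \<times> nat" where
  "unface_fst j x = (snd x, coface_retr j (fst x))"

definition unface_snd :: "nat \<Rightarrow> nat \<times> nat \<Rightarrow> nat \<times> nat" where
  "unface_snd i x = (coface_retr i (snd x), fst x)"

lemma face_fst_eq: "face_fst j = prod.swap \<circ> map_prod id (coface j)"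
  by (simp add: face_fst_def fun_eq_iff)

lemma face_snd_eq: "face_snd i = prod.swap \<circ> map_prod (coface i) id"
  by (simp add: face_snd_def fun_eq_iff)

lemma unface_face [simp]: "unface_fst j (face_fst j x) = x" "unface_snd i (face_snd i x) = x"
  by (simp_all add: face_fst_def unface_fst_def face_snd_def unface_snd_def)

lemma face_unface_fst: "fst x \<noteq> j \<Longrightarrow> face_fst j (unface_fst j x) = x"
  by (simp add: face_fst_def unface_fst_def coface_coface_retr)

lemma face_unface_snd: "snd x \<noteq> i \<Longrightarrow> face_snd i (unface_snd i x) = x"
  by (simp add: face_snd_def unface_snd_def coface_coface_retr)

lemma swap_unface_fst: "fst x \<noteq> j \<Longrightarrow> prod.swap x = map_prod id (coface j) (unface_fst j x)"
  by (simp add: unface_fst_def coface_coface_retr prod.swap_def)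

lemma swap_unface_snd: "snd x \<noteq> i \<Longrightarrow> prod.swap x = map_prod (coface i) id (unface_snd i x)"
  by (simp add: unface_snd_def coface_coface_retr prod.swap_def)

lemma grid_embedding_faces:
  "grid_embedding U prod.swap" "grid_embedding U (face_fst j)" "grid_embedding U (face_snd i)"
  by (auto simp: grid_embedding_def grid_le_def face_fst_def face_snd_def)

lemma grid_embedding_unface_fst: "grid_embedding {x. fst x \<noteq> j} (unface_fst j)"
  by (auto simp: grid_embedding_def grid_le_def unface_fst_def coface_retr_le_iff)

lemma grid_embedding_unface_snd: "grid_embedding {x. snd x \<noteq> i} (unface_snd i)"
  by (auto simp: grid_embedding_def grid_le_def unface_snd_def coface_retr_le_iff)

lemma Skmn_eq: "Skmn k n m = full_subposet (xi (hat_check n m)) {As. in_subcomplex k n m (last As)}"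
  by (simp add: Skmn_def full_subposet_def xi_def Collect_conj_eq)

lemma in_subcomplex_iff:
  assumes "S \<subseteq> {0..n} \<times> {0..m}"
  shows "in_subcomplex k n m S \<longleftrightarrow> (\<exists>j\<le>n. j \<noteq> k \<and> j \<notin> fst ` S) \<or> (\<exists>i\<le>m. i \<notin> snd ` S)"
proof -
  have "fst ` S \<subseteq> {0..n}" "snd ` S \<subseteq> {0..m}" using assms by auto
  moreover have "(A \<noteq> B \<and> A \<noteq> B - {k}) \<longleftrightarrow> \<not> B - {k} \<subseteq> A" if "A \<subseteq> B" for A B :: "nat set"
    using that by (cases "k \<in> A") auto
  ultimately show ?thesis
    unfolding in_subcomplex_def by (auto simp: subset_iff)
qed

lemma xi_chain_face_fst:
  "1 \<le> n \<Longrightarrow> xi_chain (check_hat m (n - 1)) As \<Longrightarrow> xi_chain (hat_check n m) (ximg (face_fst j) As)"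
  by (rule xi_chain_ximg[OF _ _ _ xi_chain_last_subset grid_embedding_faces(2)])
    (auto simp: face_fst_def intro!: coface_le)

lemma xi_chain_face_snd:
  "1 \<le> m \<Longrightarrow> xi_chain (check_hat (m - 1) n) As \<Longrightarrow> xi_chain (hat_check n m) (ximg (face_snd i) As)"
  by (rule xi_chain_ximg[OF _ _ _ xi_chain_last_subset grid_embedding_faces(3)])
    (auto simp: face_snd_def intro!: coface_le)

lemma face_fst_in_Skmn:
  assumes "1 \<le> n" "j \<le> n" "j \<noteq> k" "xi_chain (check_hat m (n - 1)) As"
  shows "ximg (face_fst j) As \<in> pcar (Skmn k n m)"
proof -
  have chain: "xi_chain (hat_check n m) (ximg (face_fst j) As)"
    using xi_chain_face_fst assms(1,4) .
  moreover have "j \<notin> fst ` last (ximg (face_fst j) As)"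
    using assms(4) by (auto simp: xi_chain_def face_fst_def)
  ultimately show ?thesis
    using assms(2,3) xi_chain_last_subset[OF chain] by (auto simp: Skmn_eq in_subcomplex_iff)
qed

lemma face_snd_in_Skmn:
  assumes "1 \<le> m" "i \<le> m" "xi_chain (check_hat (m - 1) n) As"
  shows "ximg (face_snd i) As \<in> pcar (Skmn k n m)"
proof -
  have chain: "xi_chain (hat_check n m) (ximg (face_snd i) As)"
    using xi_chain_face_snd assms(1,3) .
  moreover have "i \<notin> snd ` last (ximg (face_snd i) As)"
    using assms(3) by (auto simp: xi_chain_def face_snd_def)
  ultimately show ?thesis
    using assms(2) xi_chain_last_subset[OF chain] by (auto simp: Skmn_eq in_subcomplex_iff)
qed

lemma relfun_face_fst_restriction:
  assumes "relfun (Skmn k n m) M F" "1 \<le> n" "j \<le> n" "j \<noteq> k"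
  shows "relfun (xi (check_hat m (n - 1))) M (xi_pullback (xi (check_hat m (n - 1))) (face_fst j) F)"
  using assms(1) unfolding Skmn_eq
  by (rule relfun_xi_pullback_xi)
    (use face_fst_in_Skmn[OF assms(2-4)] grid_embedding_faces assms(2) in
      \<open>auto simp: Skmn_eq face_fst_def grid_le_def intro!: coface_le\<close>)

lemma relfun_face_snd_restriction:
  assumes "relfun (Skmn k n m) M F" "1 \<le> m" "i \<le> m"
  shows "relfun (xi (check_hat (m - 1) n)) M (xi_pullback (xi (check_hat (m - 1) n)) (face_snd i) F)"
  using assms(1) unfolding Skmn_eq
  by (rule relfun_xi_pullback_xi)
    (use face_snd_in_Skmn[OF assms(2,3)] grid_embedding_faces assms(2) in
      \<open>auto simp: Skmn_eq face_snd_def grid_le_def intro!: coface_le\<close>)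


lemma face_fst_restrictions_compatible:
  assumes "2 \<le> n" "i < j"
  shows "vface m (n - 1) i (xi_pullback (xi (check_hat m (n - 1))) (face_fst j) F) =
         vface m (n - 1) (j - 1) (xi_pullback (xi (check_hat m (n - 1))) (face_fst i) F)"
proof -
  have "face_fst j \<circ> map_prod id (coface i) = face_fst i \<circ> map_prod id (coface (j - 1))"
    using coface_coface[OF assms(2)] by (simp add: fun_eq_iff face_fst_def)
  then show ?thesis using assms(1) by (simp add: vface_xi_pullback)
qed

lemma face_snd_restrictions_compatible:
  assumes "2 \<le> m" "i < j"
  shows "hface (m - 1) n i (xi_pullback (xi (check_hat (m - 1) n)) (face_snd j) F) =
         hface (m - 1) n (j - 1) (xi_pullback (xi (check_hat (m - 1) n)) (face_snd i) F)"
proof -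
  have "face_snd j \<circ> map_prod (coface i) id = face_snd i \<circ> map_prod (coface (j - 1)) id"
    using coface_coface[OF assms(2)] by (simp add: fun_eq_iff face_snd_def)
  then show ?thesis using assms(1) by (simp add: hface_xi_pullback)
qed

lemma face_restrictions_compatible:
  assumes "1 \<le> m" "1 \<le> n"
  shows "vface (m - 1) n j (xi_pullback (xi (check_hat (m - 1) n)) (face_snd i) F) =
         hface m (n - 1) i (xi_pullback (xi (check_hat m (n - 1))) (face_fst j) F)"
proof -
  have "face_snd i \<circ> map_prod id (coface j) = face_fst j \<circ> map_prod (coface i) id"
    by (simp add: fun_eq_iff face_fst_def face_snd_def)
  then show ?thesis using assms by (simp add: vface_xi_pullback hface_xi_pullback)
qed

lemma agree_on_fst_region:
  assumes face: "vface m n j x = xi_pullback (xi (check_hat m (n - 1))) (face_fst j) F"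
    and "j \<le> n" and As: "xi_chain (hat_check n m) As" "xi_chain (hat_check n m) Bs" "set Bs \<subseteq> set As"
    and "j \<notin> fst ` last As"
  shows "x (ximg prod.swap Bs) (ximg prod.swap As) = F Bs As"
proof -
  let ?U = "{z. fst z \<noteq> j} \<inter> ({0..n} \<times> {0..m})"
  have "x (ximg prod.swap Bs) (ximg prod.swap As) = F (ximg id Bs) (ximg id As)"
  proof (rule xi_pullback_eq_on_region[OF face[unfolded vface_eq] _ _ As])
    have "last As \<subseteq> {0..n} \<times> {0..m}" using xi_chain_last_subset[OF As(1)] by simp
    then show "last As \<subseteq> ?U" using assms(6) by blast
    show "grid_embedding ?U (unface_fst j)"
      by (rule grid_embedding_subset[OF grid_embedding_unface_fst]) blast
    show "unface_fst j ` ?U \<subseteq> pcar (check_hat m (n - 1))"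
      using \<open>j \<le> n\<close> by (auto simp: unface_fst_def coface_retr_def)
    show "prod.swap z = map_prod id (coface j) (unface_fst j z)" if "z \<in> ?U" for z
      by (rule swap_unface_fst) (use that in simp)
    show "id z = face_fst j (unface_fst j z)" if "z \<in> ?U" for z
      using face_unface_fst[of z j] that by simp
  qed simp_all
  then show ?thesis using As by (simp add: ximg_id xi_chain_def)
qed

lemma agree_on_snd_region:
  assumes face: "hface m n i x = xi_pullback (xi (check_hat (m - 1) n)) (face_snd i) F"
    and "i \<le> m" and As: "xi_chain (hat_check n m) As" "xi_chain (hat_check n m) Bs" "set Bs \<subseteq> set As"
    and "i \<notin> snd ` last As"
  shows "x (ximg prod.swap Bs) (ximg prod.swap As) = F Bs As"
proof -
  let ?U = "{z. snd z \<noteq> i} \<inter> ({0..n} \<times> {0..m})"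
  have "x (ximg prod.swap Bs) (ximg prod.swap As) = F (ximg id Bs) (ximg id As)"
  proof (rule xi_pullback_eq_on_region[OF face[unfolded hface_eq] _ _ As])
    have "last As \<subseteq> {0..n} \<times> {0..m}" using xi_chain_last_subset[OF As(1)] by simp
    then show "last As \<subseteq> ?U" using assms(6) by blast
    show "grid_embedding ?U (unface_snd i)"
      by (rule grid_embedding_subset[OF grid_embedding_unface_snd]) blast
    show "unface_snd i ` ?U \<subseteq> pcar (check_hat (m - 1) n)"
      using \<open>i \<le> m\<close> by (auto simp: unface_snd_def coface_retr_def)
    show "prod.swap z = map_prod (coface i) id (unface_snd i z)" if "z \<in> ?U" for z
      by (rule swap_unface_snd) (use that in simp)
    show "id z = face_snd i (unface_snd i z)" if "z \<in> ?U" for z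
      using face_unface_snd[of z i] that by simp
  qed simp_all
  then show ?thesis using As by (simp add: ximg_id xi_chain_def)
qed

lemma unface_fst_agree:
  assumes hc: "vface p (q - 1) j y' = vface p (q - 1) (j' - 1) y" and jj: "j < j'" "j' \<le> q"
    and As: "xi_chain (hat_check q p) As" "xi_chain (hat_check q p) Bs" "set Bs \<subseteq> set As"
    and region: "j \<notin> fst ` last As" "j' \<notin> fst ` last As"
  shows "y' (ximg (unface_fst j') Bs) (ximg (unface_fst j') As) =
         y (ximg (unface_fst j) Bs) (ximg (unface_fst j) As)"
proof -
  let ?U = "{z. fst z \<noteq> j \<and> fst z \<noteq> j'} \<inter> ({0..q} \<times> {0..p})"
  let ?t = "\<lambda>z. (snd z, coface_retr j (coface_retr j' (fst z)))"
  show ?thesis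
  proof (rule xi_pullback_eq_on_region[OF hc[unfolded vface_eq] _ _ As, where t = ?t])
    have "last As \<subseteq> {0..q} \<times> {0..p}" using xi_chain_last_subset[OF As(1)] by simp
    then show "last As \<subseteq> ?U" using region by blast
    show "grid_embedding ?U ?t"
      using coface_retr_coface_retr(3)[OF _ _ jj(1)] by (auto simp: grid_embedding_def grid_le_def)
    show "?t ` ?U \<subseteq> pcar (check_hat p (q - 1 - 1))"
      using coface_retr_coface_retr(4)[OF _ _ jj(1) _ jj(2)] by auto
    show "unface_fst j' z = map_prod id (coface j) (?t z)" if "z \<in> ?U" for z
      using coface_retr_coface_retr(1)[of "fst z", OF _ _ jj(1)] that by (simp add: unface_fst_def)
    show "unface_fst j z = map_prod id (coface (j' - 1)) (?t z)" if "z \<in> ?U" for z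
      using coface_retr_coface_retr(2)[of "fst z", OF _ _ jj(1)] that by (simp add: unface_fst_def)
  qed simp_all
qed

lemma unface_snd_agree:
  assumes hc: "hface (p - 1) q i b' = hface (p - 1) q (i' - 1) b" and ii: "i < i'" "i' \<le> p"
    and As: "xi_chain (hat_check q p) As" "xi_chain (hat_check q p) Bs" "set Bs \<subseteq> set As"
    and region: "i \<notin> snd ` last As" "i' \<notin> snd ` last As"
  shows "b' (ximg (unface_snd i') Bs) (ximg (unface_snd i') As) =
         b (ximg (unface_snd i) Bs) (ximg (unface_snd i) As)"
proof -
  let ?U = "{z. snd z \<noteq> i \<and> snd z \<noteq> i'} \<inter> ({0..q} \<times> {0..p})"
  let ?t = "\<lambda>z. (coface_retr i (coface_retr i' (snd z)), fst z)"
  show ?thesis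
  proof (rule xi_pullback_eq_on_region[OF hc[unfolded hface_eq] _ _ As, where t = ?t])
    have "last As \<subseteq> {0..q} \<times> {0..p}" using xi_chain_last_subset[OF As(1)] by simp
    then show "last As \<subseteq> ?U" using region by blast
    show "grid_embedding ?U ?t"
      using coface_retr_coface_retr(3)[OF _ _ ii(1)] by (auto simp: grid_embedding_def grid_le_def)
    show "?t ` ?U \<subseteq> pcar (check_hat (p - 1 - 1) q)"
      using coface_retr_coface_retr(4)[OF _ _ ii(1) _ ii(2)] by auto
    show "unface_snd i' z = map_prod (coface i) id (?t z)" if "z \<in> ?U" for z
      using coface_retr_coface_retr(1)[of "snd z", OF _ _ ii(1)] that by (simp add: unface_snd_def)
    show "unface_snd i z = map_prod (coface (i' - 1)) id (?t z)" if "z \<in> ?U" for z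
      using coface_retr_coface_retr(2)[of "snd z", OF _ _ ii(1)] that by (simp add: unface_snd_def)
  qed simp_all
qed

lemma unface_fst_snd_agree:
  assumes hc: "vface (p - 1) q j b = hface p (q - 1) i y" and "i \<le> p" "j \<le> q"
    and As: "xi_chain (hat_check q p) As" "xi_chain (hat_check q p) Bs" "set Bs \<subseteq> set As"
    and region: "j \<notin> fst ` last As" "i \<notin> snd ` last As"
  shows "y (ximg (unface_fst j) Bs) (ximg (unface_fst j) As) =
         b (ximg (unface_snd i) Bs) (ximg (unface_snd i) As)"
proof -
  let ?U = "{z. fst z \<noteq> j \<and> snd z \<noteq> i} \<inter> ({0..q} \<times> {0..p})"
  let ?t = "\<lambda>z. (coface_retr i (snd z), coface_retr j (fst z))"
  show ?thesis
  proof (rule xi_pullback_eq_on_region[OF hc[symmetric, unfolded vface_eq hface_eq] _ _ As,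
        where t = ?t])
    have "last As \<subseteq> {0..q} \<times> {0..p}" using xi_chain_last_subset[OF As(1)] by simp
    then show "last As \<subseteq> ?U" using region by blast
    show "grid_embedding ?U ?t"
      by (auto simp: grid_embedding_def grid_le_def coface_retr_le_iff)
    show "?t ` ?U \<subseteq> pcar (check_hat (p - 1) (q - 1))"
      using \<open>i \<le> p\<close> \<open>j \<le> q\<close> by (auto simp: coface_retr_def)
    show "unface_fst j z = map_prod (coface i) id (?t z)" if "z \<in> ?U" for z
      using coface_coface_retr[of "snd z" i] that by (simp add: unface_fst_def)
    show "unface_snd i z = map_prod id (coface j) (?t z)" if "z \<in> ?U" for z
      using coface_coface_retr[of "fst z" j] that by (simp add: unface_snd_def)
  qed simp_all
qed

lemma relfun_unface_fst_piece:
  assumes "relfun (xi (check_hat p (q - 1))) M Y" "j \<le> q"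
  shows "relfun (full_subposet (Skmn k q p) {As. j \<notin> fst ` last As}) M
           (xi_pullback (full_subposet (Skmn k q p) {As. j \<notin> fst ` last As}) (unface_fst j) Y)"
  unfolding Skmn_eq full_subposet_full_subposet
proof (rule relfun_xi_pullback[where B = UNIV and U = "{z. fst z \<noteq> j} \<inter> ({0..q} \<times> {0..p})"])
  show "relfun (full_subposet (xi (check_hat p (q - 1))) UNIV) M Y" using assms(1) by simp
  show "last As \<subseteq> {z. fst z \<noteq> j} \<inter> ({0..q} \<times> {0..p})"
    if "As \<in> pcar (xi (hat_check q p)) \<inter>
          ({As. in_subcomplex k q p (last As)} \<inter> {As. j \<notin> fst ` last As})" for As
  proof -
    have "last As \<subseteq> {0..q} \<times> {0..p}" using that xi_chain_last_subset by fastforce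
    then show ?thesis using that by blast
  qed
  show "grid_embedding ({z. fst z \<noteq> j} \<inter> ({0..q} \<times> {0..p})) (unface_fst j)"
    by (rule grid_embedding_subset[OF grid_embedding_unface_fst]) blast
  show "unface_fst j ` ({z. fst z \<noteq> j} \<inter> ({0..q} \<times> {0..p})) \<subseteq> pcar (check_hat p (q - 1))"
    using \<open>j \<le> q\<close> by (auto simp: unface_fst_def coface_retr_def)
qed (auto simp: unface_fst_def grid_le_def coface_retr_le_iff)

lemma relfun_unface_snd_piece:
  assumes "relfun (xi (check_hat (p - 1) q)) M B" "i \<le> p"
  shows "relfun (full_subposet (Skmn k q p) {As. i \<notin> snd ` last As}) M
           (xi_pullback (full_subposet (Skmn k q p) {As. i \<notin> snd ` last As}) (unface_snd i) B)"
  unfolding Skmn_eq full_subposet_full_subposet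
proof (rule relfun_xi_pullback[where B = UNIV and U = "{z. snd z \<noteq> i} \<inter> ({0..q} \<times> {0..p})"])
  show "relfun (full_subposet (xi (check_hat (p - 1) q)) UNIV) M B" using assms(1) by simp
  show "last As \<subseteq> {z. snd z \<noteq> i} \<inter> ({0..q} \<times> {0..p})"
    if "As \<in> pcar (xi (hat_check q p)) \<inter>
          ({As. in_subcomplex k q p (last As)} \<inter> {As. i \<notin> snd ` last As})" for As
  proof -
    have "last As \<subseteq> {0..q} \<times> {0..p}" using that xi_chain_last_subset by fastforce
    then show ?thesis using that by blast
  qed
  show "grid_embedding ({z. snd z \<noteq> i} \<inter> ({0..q} \<times> {0..p})) (unface_snd i)"
    by (rule grid_embedding_subset[OF grid_embedding_unface_snd]) blast
  show "unface_snd i ` ({z. snd z \<noteq> i} \<inter> ({0..q} \<times> {0..p})) \<subseteq> pcar (check_hat (p - 1) q)"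
    using \<open>i \<le> p\<close> by (auto simp: unface_snd_def coface_retr_def)
qed (auto simp: unface_snd_def grid_le_def)

section \<open>Horns in the matching map\<close>

text \<open>The hypotheses of \<open>kan_fibration\<close> for \<open>N_\<xi>M\<close> in degree \<open>p\<close>, with the matching family
  \<open>b\<close> unpacked (it is empty for \<open>p = 0\<close>).\<close>

definition horn_data :: "('o, 'm) relcat \<Rightarrow> nat \<Rightarrow> nat \<Rightarrow> nat \<Rightarrow>
    (nat \<Rightarrow> (nat \<times> nat) set list \<Rightarrow> (nat \<times> nat) set list \<Rightarrow> 'm) \<Rightarrow>
    (nat \<Rightarrow> (nat \<times> nat) set list \<Rightarrow> (nat \<times> nat) set list \<Rightarrow> 'm) \<Rightarrow> bool" where
  "horn_data M k q p y b \<longleftrightarrow>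
     (\<forall>j\<le>q. j \<noteq> k \<longrightarrow> relfun (xi (check_hat p (q - 1))) M (y j)) \<and>
     (\<forall>i j. i < j \<longrightarrow> j \<le> q \<longrightarrow> i \<noteq> k \<longrightarrow> j \<noteq> k \<longrightarrow>
        vface p (q - 1) i (y j) = vface p (q - 1) (j - 1) (y i)) \<and>
     (0 < p \<longrightarrow>
        (\<forall>i\<le>p. relfun (xi (check_hat (p - 1) q)) M (b i)) \<and>
        (\<forall>i j. i < j \<longrightarrow> j \<le> p \<longrightarrow> hface (p - 1) q i (b j) = hface (p - 1) q (j - 1) (b i)) \<and>
        (\<forall>i\<le>p. \<forall>j\<le>q. j \<noteq> k \<longrightarrow> vface (p - 1) q j (b i) = hface p (q - 1) i (y j)))"

lemma horn_dataD:
  assumes "horn_data M k q p y b"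
  shows "\<And>j. j \<le> q \<Longrightarrow> j \<noteq> k \<Longrightarrow> relfun (xi (check_hat p (q - 1))) M (y j)"
    and "\<And>i j. i < j \<Longrightarrow> j \<le> q \<Longrightarrow> i \<noteq> k \<Longrightarrow> j \<noteq> k \<Longrightarrow>
           vface p (q - 1) i (y j) = vface p (q - 1) (j - 1) (y i)"
    and "\<And>i. 0 < p \<Longrightarrow> i \<le> p \<Longrightarrow> relfun (xi (check_hat (p - 1) q)) M (b i)"
    and "\<And>i j. 0 < p \<Longrightarrow> i < j \<Longrightarrow> j \<le> p \<Longrightarrow>
           hface (p - 1) q i (b j) = hface (p - 1) q (j - 1) (b i)"
    and "\<And>i j. 0 < p \<Longrightarrow> i \<le> p \<Longrightarrow> j \<le> q \<Longrightarrow> j \<noteq> k \<Longrightarrow>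
           vface (p - 1) q j (b i) = hface p (q - 1) i (y j)"
  using assms unfolding horn_data_def by blast+

lemma horn_data_of_kan_hyps:
  assumes "\<forall>j\<le>q. j \<noteq> k \<longrightarrow> y j \<in> NX M p (q - 1)"
    and "\<forall>i j. i < j \<longrightarrow> j \<le> q \<longrightarrow> i \<noteq> k \<longrightarrow> j \<noteq> k \<longrightarrow>
           vface p (q - 1) i (y j) = vface p (q - 1) (j - 1) (y i)"
    and "b \<in> Match M p q"
    and face: "\<forall>j\<le>q. j \<noteq> k \<longrightarrow> match_face p q j b = match_map p (q - 1) (y j)"
  shows "horn_data M k q p y b"
proof -
  have "vface (p - 1) q j (b i) = hface p (q - 1) i (y j)"
    if "0 < p" "i \<le> p" "j \<le> q" "j \<noteq> k" for i j
    using fun_cong[OF face[rule_format, OF that(3,4)], of i] that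
    by (simp add: match_face_def match_map_def)
  then show ?thesis
    using assms(1-3) by (auto simp: horn_data_def NX_def Match_def)
qed

lemma kan_hyps_of_horn_data:
  assumes data: "horn_data M k q p y b" and undef: "\<And>i. p = 0 \<or> p < i \<Longrightarrow> b i = undefined"
  shows "\<forall>j\<le>q. j \<noteq> k \<longrightarrow> y j \<in> NX M p (q - 1)"
    and "\<forall>i j. i < j \<longrightarrow> j \<le> q \<longrightarrow> i \<noteq> k \<longrightarrow> j \<noteq> k \<longrightarrow>
           vface p (q - 1) i (y j) = vface p (q - 1) (j - 1) (y i)"
    and "b \<in> Match M p q"
    and "\<forall>j\<le>q. j \<noteq> k \<longrightarrow> match_face p q j b = match_map p (q - 1) (y j)"
proof -
  show "\<forall>j\<le>q. j \<noteq> k \<longrightarrow> y j \<in> NX M p (q - 1)"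
    using horn_dataD(1)[OF data] by (simp add: NX_def)
  show "\<forall>i j. i < j \<longrightarrow> j \<le> q \<longrightarrow> i \<noteq> k \<longrightarrow> j \<noteq> k \<longrightarrow>
      vface p (q - 1) i (y j) = vface p (q - 1) (j - 1) (y i)"
    using horn_dataD(2)[OF data] by blast
  have "b = (\<lambda>i. undefined)" if "p = 0" using undef that by auto
  then show "b \<in> Match M p q"
    using horn_dataD(3,4)[OF data] undef by (auto simp: Match_def NX_def)
  show "\<forall>j\<le>q. j \<noteq> k \<longrightarrow> match_face p q j b = match_map p (q - 1) (y j)"
    using horn_dataD(5)[OF data] by (auto simp: match_face_def match_map_def fun_eq_iff)
qed

lemma horn_data_of_restriction:
  assumes F: "relfun (Skmn k n m) M F" and "1 \<le> n" "k \<le> n"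
  shows "horn_data M k n m (\<lambda>j. xi_pullback (xi (check_hat m (n - 1))) (face_fst j) F)
    (\<lambda>i. if 0 < m \<and> i \<le> m then xi_pullback (xi (check_hat (m - 1) n)) (face_snd i) F else undefined)"
  (is "horn_data M k n m ?y ?b")
proof -
  have "hface (m - 1) n i (?b j) = hface (m - 1) n (j - 1) (?b i)" if "0 < m" "i < j" "j \<le> m" for i j
  proof (cases "m = 1")
    case True
    have "hface 0 n 0 (xi_pullback (xi (check_hat 0 n)) (face_snd l) F) = (\<lambda>_ _. undefined)"
      if "l \<le> 1" for l
      by (rule hface_zero[where M = M]) (use relfun_face_snd_restriction[OF F, of l] True that in simp)
    moreover have "i = 0" "j = 1" using that True by auto
    ultimately show ?thesis using True by simp
  next
    case False
    then show ?thesis using that face_snd_restrictions_compatible[of m i j] by simp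
  qed
  moreover have "vface m (n - 1) i (?y j) = vface m (n - 1) (j - 1) (?y i)"
    if "i < j" "j \<le> n" "i \<noteq> k" "j \<noteq> k" for i j
  proof -
    \<comment> \<open>a horn in dimension 1 has a single face, so two distinct faces force \<open>n \<ge> 2\<close>\<close>
    have "2 \<le> n" using that \<open>k \<le> n\<close> by arith
    then show ?thesis using face_fst_restrictions_compatible \<open>i < j\<close> by blast
  qed
  ultimately show ?thesis
    unfolding horn_data_def
    using relfun_face_fst_restriction[OF F \<open>1 \<le> n\<close>] relfun_face_snd_restriction[OF F]
      face_restrictions_compatible[of m n] \<open>1 \<le> n\<close>
    by auto
qed

text \<open>\<open>Inl j\<close> indexes the face \<open>\<partial>_j\<Delta>[q] \<times> \<Delta>[p]\<close> and \<open>Inr i\<close> the face \<open>\<Delta>[q] \<times> \<partial>_i\<Delta>[p]\<close>;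
  \<open>face_region f\<close> consists of the chains whose top set lies in the face \<open>f\<close>.\<close>

definition face_region :: "nat + nat \<Rightarrow> (nat \<times> nat) set list set" where
  "face_region f = (case f of Inl j \<Rightarrow> {As. j \<notin> fst ` last As} | Inr i \<Rightarrow> {As. i \<notin> snd ` last As})"

definition horn_faces :: "nat \<Rightarrow> nat \<Rightarrow> nat \<Rightarrow> (nat + nat) set" where
  "horn_faces k q p = Inl ` {j. j \<le> q \<and> j \<noteq> k} \<union> Inr ` {i. i \<le> p \<and> 0 < p}"

definition horn_piece :: "nat \<Rightarrow> nat \<Rightarrow> nat \<Rightarrow>
    (nat \<Rightarrow> (nat \<times> nat) set list \<Rightarrow> (nat \<times> nat) set list \<Rightarrow> 'm) \<Rightarrow>
    (nat \<Rightarrow> (nat \<times> nat) set list \<Rightarrow> (nat \<times> nat) set list \<Rightarrow> 'm) \<Rightarrow>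
    nat + nat \<Rightarrow> (nat \<times> nat) set list \<Rightarrow> (nat \<times> nat) set list \<Rightarrow> 'm" where
  "horn_piece k q p y b f = xi_pullback (full_subposet (Skmn k q p) (face_region f))
     (case_sum unface_fst unface_snd f) (case_sum y b f)"

definition horn_glue :: "nat \<Rightarrow> nat \<Rightarrow> nat \<Rightarrow>
    (nat \<Rightarrow> (nat \<times> nat) set list \<Rightarrow> (nat \<times> nat) set list \<Rightarrow> 'm) \<Rightarrow>
    (nat \<Rightarrow> (nat \<times> nat) set list \<Rightarrow> (nat \<times> nat) set list \<Rightarrow> 'm) \<Rightarrow>
    (nat \<times> nat) set list \<Rightarrow> (nat \<times> nat) set list \<Rightarrow> 'm" where
  "horn_glue k q p y b = glue (Skmn k q p) (horn_faces k q p) face_region (horn_piece k q p y b)"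

lemma face_region_simps [simp]:
  "face_region (Inl j) = {As. j \<notin> fst ` last As}" "face_region (Inr i) = {As. i \<notin> snd ` last As}"
  by (simp_all add: face_region_def)

lemma face_region_down:
  assumes "As \<in> pcar (Skmn k q p)" "set Bs \<subseteq> set As" "Bs \<noteq> []" "As \<in> face_region f"
  shows "Bs \<in> face_region f"
proof -
  have "last Bs \<in> set As" using assms(2,3) by auto
  then have "last Bs \<subseteq> last As"
    using assms(1) xi_chain_subset_last[of "hat_check q p" As] by (auto simp: Skmn_eq)
  then show ?thesis using assms(4) by (cases f) auto
qed

lemma horn_piece_apply:
  assumes "a \<in> pcar (Skmn k q p)" "c \<in> pcar (Skmn k q p) \<inter> face_region f" "ple (Skmn k q p) a c"
  shows "horn_piece k q p y b f a c = case_sum y b f (ximg (case_sum unface_fst unface_snd f) a)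
    (ximg (case_sum unface_fst unface_snd f) c)"
proof -
  have "set a \<subseteq> set c" "a \<noteq> []" using assms(1,3) by (simp_all add: Skmn_eq xi_chain_def)
  then have "a \<in> face_region f" using face_region_down assms(2) by blast
  show ?thesis
    unfolding horn_piece_def
    by (rule xi_pullback_apply) (use assms \<open>a \<in> face_region f\<close> \<open>set a \<subseteq> set c\<close> in auto)
qed

lemma horn_pieces_consistent:
  assumes data: "horn_data M k q p y b"
    and fg: "f \<in> horn_faces k q p" "g \<in> horn_faces k q p"
    and ac: "a \<in> pcar (Skmn k q p)" "c \<in> pcar (Skmn k q p) \<inter> face_region f \<inter> face_region g"
      "ple (Skmn k q p) a c"
  shows "horn_piece k q p y b f a c = horn_piece k q p y b g a c"
proof -
  have chains: "xi_chain (hat_check q p) c" "xi_chain (hat_check q p) a" "set a \<subseteq> set c"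
    using ac by (auto simp: Skmn_eq)
  have y_compat: "y j' (ximg (unface_fst j') a) (ximg (unface_fst j') c) =
      y j (ximg (unface_fst j) a) (ximg (unface_fst j) c)"
    if "j < j'" "j' \<le> q" "j \<noteq> k" "j' \<noteq> k" "j \<notin> fst ` last c" "j' \<notin> fst ` last c" for j j'
    using unface_fst_agree[OF horn_dataD(2)[OF data that(1-4)] that(1,2) chains that(5,6)] .
  have b_compat: "b i' (ximg (unface_snd i') a) (ximg (unface_snd i') c) =
      b i (ximg (unface_snd i) a) (ximg (unface_snd i) c)"
    if "0 < p" "i < i'" "i' \<le> p" "i \<notin> snd ` last c" "i' \<notin> snd ` last c" for i i'
    using unface_snd_agree[OF horn_dataD(4)[OF data that(1-3)] that(2,3) chains that(4,5)] .
  have yb_compat: "y j (ximg (unface_fst j) a) (ximg (unface_fst j) c) =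
      b i (ximg (unface_snd i) a) (ximg (unface_snd i) c)"
    if "0 < p" "i \<le> p" "j \<le> q" "j \<noteq> k" "j \<notin> fst ` last c" "i \<notin> snd ` last c" for i j
    using unface_fst_snd_agree[OF horn_dataD(5)[OF data that(1-4)] that(2,3) chains that(5,6)] .
  have region: "c \<in> face_region f" "c \<in> face_region g" using ac(2) by auto
  have pf: "horn_piece k q p y b f a c = case_sum y b f (ximg (case_sum unface_fst unface_snd f) a)
      (ximg (case_sum unface_fst unface_snd f) c)"
    and pg: "horn_piece k q p y b g a c = case_sum y b g (ximg (case_sum unface_fst unface_snd g) a)
      (ximg (case_sum unface_fst unface_snd g) c)"
    using horn_piece_apply[OF ac(1) _ ac(3)] ac(2) by blast+
  from fg consider
      (fst_fst) j j' where "f = Inl j" "g = Inl j'" "j \<le> q" "j \<noteq> k" "j' \<le> q" "j' \<noteq> k"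
    | (fst_snd) j i where "f = Inl j" "g = Inr i" "j \<le> q" "j \<noteq> k" "i \<le> p" "0 < p"
    | (snd_fst) i j where "f = Inr i" "g = Inl j" "j \<le> q" "j \<noteq> k" "i \<le> p" "0 < p"
    | (snd_snd) i i' where "f = Inr i" "g = Inr i'" "i \<le> p" "i' \<le> p" "0 < p"
    unfolding horn_faces_def by blast
  then show ?thesis
  proof cases
    case (fst_fst j j')
    then have "j \<notin> fst ` last c" "j' \<notin> fst ` last c" using region by auto
    then show ?thesis
      using fst_fst y_compat[of j j'] y_compat[of j' j] unfolding pf pg
      by (cases j j' rule: linorder_cases) simp_all
  next
    case (fst_snd j i)
    then show ?thesis using region yb_compat[of i j] unfolding pf pg by simp
  next
    case (snd_fst i j)
    then show ?thesis using region yb_compat[of i j] unfolding pf pg by simp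
  next
    case (snd_snd i i')
    then have "i \<notin> snd ` last c" "i' \<notin> snd ` last c" using region by auto
    then show ?thesis
      using snd_snd b_compat[of i i'] b_compat[of i' i] unfolding pf pg
      by (cases i i' rule: linorder_cases) simp_all
  qed
qed

lemma Skmn_covered_by_faces:
  assumes "As \<in> pcar (Skmn k q p)"
  shows "\<exists>f\<in>horn_faces k q p. As \<in> face_region f"
proof -
  have chain: "xi_chain (hat_check q p) As" and sub: "in_subcomplex k q p (last As)"
    using assms by (auto simp: Skmn_eq)
  have box: "last As \<subseteq> {0..q} \<times> {0..p}" using xi_chain_last_subset[OF chain] by simp
  have "last As \<noteq> {}" using chain by (auto simp: xi_chain_def)
  from sub[unfolded in_subcomplex_iff[OF box]] consider
      (fst) j where "j \<le> q" "j \<noteq> k" "j \<notin> fst ` last As"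
    | (snd) i where "i \<le> p" "i \<notin> snd ` last As"
    by blast
  then show ?thesis
  proof cases
    case fst
    then show ?thesis by (auto simp: horn_faces_def intro!: bexI[of _ "Inl j"])
  next
    case snd
    have "0 < p"
    proof (rule ccontr)
      assume "\<not> 0 < p"
      obtain z where z: "z \<in> last As" using \<open>last As \<noteq> {}\<close> by blast
      then have "snd z = i" using box snd(1) \<open>\<not> 0 < p\<close> by auto
      then show False using snd(2) z by force
    qed
    then show ?thesis using snd by (auto simp: horn_faces_def intro!: bexI[of _ "Inr i"])
  qed
qed

lemma horn_glue_eq:
  assumes "horn_data M k q p y b" "f \<in> horn_faces k q p"
    "a \<in> pcar (Skmn k q p)" "c \<in> pcar (Skmn k q p) \<inter> face_region f" "ple (Skmn k q p) a c"
  shows "horn_glue k q p y b a c = horn_piece k q p y b f a c"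
  unfolding horn_glue_def
  by (rule glue_eq[where \<Phi> = "horn_faces k q p" and S = "Skmn k q p" and C = face_region
        and W = "horn_piece k q p y b", OF horn_pieces_consistent[OF assms(1)] assms(2-)])

lemma relfun_horn_glue:
  assumes data: "horn_data M k q p y b"
  shows "relfun (Skmn k q p) M (horn_glue k q p y b)"
  unfolding horn_glue_def
proof (rule relfun_glue)
  show "relfun (full_subposet (Skmn k q p) (face_region f)) M (horn_piece k q p y b f)"
    if "f \<in> horn_faces k q p" for f
    using that relfun_unface_fst_piece[OF horn_dataD(1)[OF data]]
      relfun_unface_snd_piece[OF horn_dataD(3)[OF data]]
    by (auto simp: horn_faces_def horn_piece_def)
  show "pcar (Skmn k q p) \<subseteq> (\<Union>f\<in>horn_faces k q p. face_region f)"
    using Skmn_covered_by_faces by blast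
  show "a \<in> face_region f"
    if "a \<in> pcar (Skmn k q p)" "c \<in> pcar (Skmn k q p) \<inter> face_region f" "ple (Skmn k q p) a c" for f a c
  proof (rule face_region_down)
    show "a \<noteq> []" using that(1) by (simp add: Skmn_eq xi_chain_def)
  qed (use that in \<open>auto simp: Skmn_eq\<close>)
  show "horn_piece k q p y b f a c = horn_piece k q p y b g a c"
    if "f \<in> horn_faces k q p" "g \<in> horn_faces k q p" "a \<in> pcar (Skmn k q p)"
      "c \<in> pcar (Skmn k q p) \<inter> face_region f \<inter> face_region g" "ple (Skmn k q p) a c" for f g a c
    by (rule horn_pieces_consistent[OF data that])
qed (auto simp: Skmn_eq)

lemma horn_glue_face_fst:
  assumes data: "horn_data M k q p y b" and j: "1 \<le> q" "j \<le> q" "j \<noteq> k"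
    and DC: "xi_chain (check_hat p (q - 1)) Ds" "xi_chain (check_hat p (q - 1)) Cs" "set Ds \<subseteq> set Cs"
  shows "horn_glue k q p y b (ximg (face_fst j) Ds) (ximg (face_fst j) Cs) = y j Ds Cs"
proof -
  let ?D = "ximg (face_fst j) Ds" and ?C = "ximg (face_fst j) Cs"
  have S: "?D \<in> pcar (Skmn k q p)" "?C \<in> pcar (Skmn k q p)"
    using face_fst_in_Skmn[OF j] DC by blast+
  have region: "?D \<in> face_region (Inl j)" "?C \<in> face_region (Inl j)"
    using DC by (auto simp: xi_chain_def face_fst_def)
  have le: "ple (Skmn k q p) ?D ?C" using DC(3) by (auto simp: Skmn_eq)
  have "horn_glue k q p y b ?D ?C = horn_piece k q p y b (Inl j) ?D ?C"
    using horn_glue_eq[OF data _ S(1) _ le] S(2) region(2) j by (simp add: horn_faces_def)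
  also have "\<dots> = y j (ximg (unface_fst j) ?D) (ximg (unface_fst j) ?C)"
    unfolding horn_piece_def sum.case by (rule xi_pullback_apply) (use S region DC(3) in auto)
  also have "\<dots> = y j Ds Cs"
    using ximg_left_inverse[OF DC(1), of "unface_fst j" "face_fst j"]
      ximg_left_inverse[OF DC(2), of "unface_fst j" "face_fst j"] by simp
  finally show ?thesis .
qed

lemma horn_glue_face_snd:
  assumes data: "horn_data M k q p y b" and i: "0 < p" "i \<le> p"
    and DC: "xi_chain (check_hat (p - 1) q) Ds" "xi_chain (check_hat (p - 1) q) Cs" "set Ds \<subseteq> set Cs"
  shows "horn_glue k q p y b (ximg (face_snd i) Ds) (ximg (face_snd i) Cs) = b i Ds Cs"
proof -
  let ?D = "ximg (face_snd i) Ds" and ?C = "ximg (face_snd i) Cs"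
  have S: "?D \<in> pcar (Skmn k q p)" "?C \<in> pcar (Skmn k q p)"
    using face_snd_in_Skmn[of p i] i DC by auto
  have region: "?D \<in> face_region (Inr i)" "?C \<in> face_region (Inr i)"
    using DC by (auto simp: xi_chain_def face_snd_def)
  have le: "ple (Skmn k q p) ?D ?C" using DC(3) by (auto simp: Skmn_eq)
  have "horn_glue k q p y b ?D ?C = horn_piece k q p y b (Inr i) ?D ?C"
    using horn_glue_eq[OF data _ S(1) _ le] S(2) region(2) i by (simp add: horn_faces_def)
  also have "\<dots> = b i (ximg (unface_snd i) ?D) (ximg (unface_snd i) ?C)"
    unfolding horn_piece_def sum.case by (rule xi_pullback_apply) (use S region DC(3) in auto)
  also have "\<dots> = b i Ds Cs"
    using ximg_left_inverse[OF DC(1), of "unface_snd i" "face_snd i"]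
      ximg_left_inverse[OF DC(2), of "unface_snd i" "face_snd i"] by simp
  finally show ?thesis .
qed

section \<open>Reedy fibrancy\<close>

lemma relfun_swap_check_hat:
  "relfun (xi (check_hat p q)) M x \<Longrightarrow>
   relfun (xi (hat_check q p)) M (xi_pullback (xi (hat_check q p)) prod.swap x)"
  by (rule relfun_xi_pullback_xi[where B = UNIV, simplified]) (auto simp: grid_embedding_faces grid_le_def)

lemma relfun_swap_hat_check:
  "relfun (xi (hat_check q p)) M G \<Longrightarrow>
   relfun (xi (check_hat p q)) M (xi_pullback (xi (check_hat p q)) prod.swap G)"
  by (rule relfun_xi_pullback_xi[where B = UNIV, simplified]) (auto simp: grid_embedding_faces grid_le_def)

lemma swap_horn_filler_extends:
  assumes y: "\<forall>j\<le>n. j \<noteq> k \<longrightarrow> vface m n j x = xi_pullback (xi (check_hat m (n - 1))) (face_fst j) F"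
    and b: "match_map m n x =
      (\<lambda>i. if 0 < m \<and> i \<le> m then xi_pullback (xi (check_hat (m - 1) n)) (face_snd i) F else undefined)"
    and BA: "Bs \<in> pcar (Skmn k n m)" "As \<in> pcar (Skmn k n m)" "ple (Skmn k n m) Bs As"
  shows "xi_pullback (xi (hat_check n m)) prod.swap x Bs As = F Bs As"
proof -
  have chains: "xi_chain (hat_check n m) As" "xi_chain (hat_check n m) Bs" "set Bs \<subseteq> set As"
    using BA by (auto simp: Skmn_eq)
  then have "xi_pullback (xi (hat_check n m)) prod.swap x Bs As = x (ximg prod.swap Bs) (ximg prod.swap As)"
    by (simp add: xi_pullback_apply)
  moreover obtain f where "f \<in> horn_faces k n m" "As \<in> face_region f"
    using Skmn_covered_by_faces[OF BA(2)] by blast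
  then consider (fst) j where "j \<le> n" "j \<noteq> k" "j \<notin> fst ` last As"
    | (snd) i where "0 < m" "i \<le> m" "i \<notin> snd ` last As"
    by (auto simp: horn_faces_def)
  then have "x (ximg prod.swap Bs) (ximg prod.swap As) = F Bs As"
  proof cases
    case fst
    show ?thesis by (rule agree_on_fst_region[OF y[rule_format, OF fst(1,2)] fst(1) chains fst(3)])
  next
    case snd
    then have "hface m n i x = xi_pullback (xi (check_hat (m - 1) n)) (face_snd i) F"
      using fun_cong[OF b, of i] by (simp add: match_map_def)
    then show ?thesis by (rule agree_on_snd_region[OF _ snd(2) chains snd(3)])
  qed
  ultimately show ?thesis by simp
qed

lemma extension_of_reedy_fibrant:
  assumes RF: "reedy_fibrant_NX M" and n: "1 \<le> n" "k \<le> n" and F: "relfun (Skmn k n m) M F"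
  shows "\<exists>G. relfun (xi (hat_check n m)) M G \<and>
           (\<forall>Bs\<in>pcar (Skmn k n m). \<forall>As\<in>pcar (Skmn k n m). ple (Skmn k n m) Bs As \<longrightarrow> G Bs As = F Bs As)"
proof -
  let ?y = "\<lambda>j. xi_pullback (xi (check_hat m (n - 1))) (face_fst j) F"
  let ?b = "\<lambda>i. if 0 < m \<and> i \<le> m then xi_pullback (xi (check_hat (m - 1) n)) (face_snd i) F else undefined"
  have "?b i = undefined" if "m = 0 \<or> m < i" for i using that by auto
  note hyps = kan_hyps_of_horn_data[OF horn_data_of_restriction[OF F n] this]
  have "kan_fibration (NX M m) (vface m) (Match M m) (match_face m) (match_map m)"
    using RF by (simp add: reedy_fibrant_NX_def)
  from this[unfolded kan_fibration_def, rule_format, OF n hyps(1)[rule_format] hyps(2)[rule_format]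
      hyps(3) hyps(4)[rule_format]]
  obtain x where x: "x \<in> NX M m n" "\<forall>j\<le>n. j \<noteq> k \<longrightarrow> vface m n j x = ?y j" "match_map m n x = ?b"
    by blast
  have "relfun (xi (hat_check n m)) M (xi_pullback (xi (hat_check n m)) prod.swap x)"
    using relfun_swap_check_hat x(1) by (simp add: NX_def)
  then show ?thesis using swap_horn_filler_extends[OF x(2,3)] by blast
qed

lemma vface_swap_horn_extension:
  assumes data: "horn_data M k q p y b" and j: "1 \<le> q" "j \<le> q" "j \<noteq> k"
    and ext: "\<And>Bs As. Bs \<in> pcar (Skmn k q p) \<Longrightarrow> As \<in> pcar (Skmn k q p) \<Longrightarrow>
                ple (Skmn k q p) Bs As \<Longrightarrow> G Bs As = horn_glue k q p y b Bs As"
  shows "vface p q j (xi_pullback (xi (check_hat p q)) prod.swap G) = y j"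
proof -
  have "vface p q j (xi_pullback (xi (check_hat p q)) prod.swap G) =
      xi_pullback (xi (check_hat p (q - 1))) (face_fst j) G"
    using j(1) by (simp add: vface_xi_pullback face_fst_eq)
  also have "\<dots> = y j"
  proof (rule xi_pullback_eqI[OF horn_dataD(1)[OF data j(2,3)]])
    fix Ds Cs assume "Ds \<in> pcar (xi (check_hat p (q - 1)))" "Cs \<in> pcar (xi (check_hat p (q - 1)))"
      "set Ds \<subseteq> set Cs"
    then show "G (ximg (face_fst j) Ds) (ximg (face_fst j) Cs) = y j Ds Cs"
      using ext face_fst_in_Skmn[OF j] horn_glue_face_fst[OF data j]
      by (simp add: Skmn_eq image_mono)
  qed
  finally show ?thesis .
qed

lemma hface_swap_horn_extension:
  assumes data: "horn_data M k q p y b" and i: "0 < p" "i \<le> p"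
    and ext: "\<And>Bs As. Bs \<in> pcar (Skmn k q p) \<Longrightarrow> As \<in> pcar (Skmn k q p) \<Longrightarrow>
                ple (Skmn k q p) Bs As \<Longrightarrow> G Bs As = horn_glue k q p y b Bs As"
  shows "hface p q i (xi_pullback (xi (check_hat p q)) prod.swap G) = b i"
proof -
  have "hface p q i (xi_pullback (xi (check_hat p q)) prod.swap G) =
      xi_pullback (xi (check_hat (p - 1) q)) (face_snd i) G"
    using i(1) by (simp add: hface_xi_pullback face_snd_eq)
  also have "\<dots> = b i"
  proof (rule xi_pullback_eqI[OF horn_dataD(3)[OF data i]])
    fix Ds Cs assume "Ds \<in> pcar (xi (check_hat (p - 1) q))" "Cs \<in> pcar (xi (check_hat (p - 1) q))"
      "set Ds \<subseteq> set Cs"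
    then show "G (ximg (face_snd i) Ds) (ximg (face_snd i) Cs) = b i Ds Cs"
      using ext face_snd_in_Skmn[of p i] horn_glue_face_snd[OF data i] i
      by (simp add: Skmn_eq image_mono)
  qed
  finally show ?thesis .
qed

lemma horn_filler_of_extension:
  assumes EXT: "\<forall>F. relfun (Skmn k q p) M F \<longrightarrow>
      (\<exists>G. relfun (xi (hat_check q p)) M G \<and>
        (\<forall>Bs\<in>pcar (Skmn k q p). \<forall>As\<in>pcar (Skmn k q p). ple (Skmn k q p) Bs As \<longrightarrow> G Bs As = F Bs As))"
    and "1 \<le> q" and data: "horn_data M k q p y b" and b: "b \<in> Match M p q"
  shows "\<exists>x\<in>NX M p q. (\<forall>j\<le>q. j \<noteq> k \<longrightarrow> vface p q j x = y j) \<and> match_map p q x = b"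
proof -
  obtain G where G: "relfun (xi (hat_check q p)) M G"
    and ext: "\<And>Bs As. Bs \<in> pcar (Skmn k q p) \<Longrightarrow> As \<in> pcar (Skmn k q p) \<Longrightarrow>
                ple (Skmn k q p) Bs As \<Longrightarrow> G Bs As = horn_glue k q p y b Bs As"
    using EXT relfun_horn_glue[OF data] by blast
  let ?x = "xi_pullback (xi (check_hat p q)) prod.swap G"
  have "match_map p q ?x = b"
  proof (cases "p = 0")
    case True
    then show ?thesis using b by (simp add: Match_def match_map_def)
  next
    case False
    have "b i = undefined" if "p < i" for i
      using b False that by (simp add: Match_def)
    then show ?thesis
      using False hface_swap_horn_extension[OF data _ _ ext] by (auto simp: match_map_def fun_eq_iff)
  qed
  moreover have "?x \<in> NX M p q"
    using relfun_swap_hat_check[OF G] by (simp add: NX_def)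
  ultimately show ?thesis
    using vface_swap_horn_extension[OF data \<open>1 \<le> q\<close> _ _ ext] by blast
qed

lemma reedy_fibrant_of_extensions:
  assumes EXT: "\<forall>n m k. 1 \<le> n \<longrightarrow> k \<le> n \<longrightarrow>
      (\<forall>F. relfun (Skmn k n m) M F \<longrightarrow>
        (\<exists>G. relfun (xi (hat_check n m)) M G \<and>
          (\<forall>Bs\<in>pcar (Skmn k n m). \<forall>As\<in>pcar (Skmn k n m). ple (Skmn k n m) Bs As \<longrightarrow> G Bs As = F Bs As)))"
  shows "reedy_fibrant_NX M"
  unfolding reedy_fibrant_NX_def kan_fibration_def
proof (intro allI impI)
  fix p q k y b
  assume "1 \<le> q" "k \<le> q" and kan: "\<forall>j\<le>q. j \<noteq> k \<longrightarrow> y j \<in> NX M p (q - 1)"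
    "\<forall>i j. i < j \<longrightarrow> j \<le> q \<longrightarrow> i \<noteq> k \<longrightarrow> j \<noteq> k \<longrightarrow>
       vface p (q - 1) i (y j) = vface p (q - 1) (j - 1) (y i)"
    "b \<in> Match M p q" "\<forall>j\<le>q. j \<noteq> k \<longrightarrow> match_face p q j b = match_map p (q - 1) (y j)"
  show "\<exists>x\<in>NX M p q. (\<forall>j\<le>q. j \<noteq> k \<longrightarrow> vface p q j x = y j) \<and> match_map p q x = b"
    using horn_filler_of_extension[OF _ \<open>1 \<le> q\<close> horn_data_of_kan_hyps[OF kan] kan(3)]
      EXT[rule_format, OF \<open>1 \<le> q\<close> \<open>k \<le> q\<close>] by blast
qed

theorem lemma5p1:
  fixes M :: "('o, 'm) relcat"
  assumes "is_relcat M"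
  shows "reedy_fibrant_NX M \<longleftrightarrow>
    (\<forall>n m k. 1 \<le> n \<longrightarrow> k \<le> n \<longrightarrow>
       (\<forall>F. relfun (Skmn k n m) M F \<longrightarrow>
          (\<exists>G. relfun (xi (hat_check n m)) M G \<and>
               (\<forall>Bs\<in>pcar (Skmn k n m). \<forall>As\<in>pcar (Skmn k n m).
                   ple (Skmn k n m) Bs As \<longrightarrow> G Bs As = F Bs As))))"
  by (intro iffI allI impI) (blast intro: extension_of_reedy_fibrant reedy_fibrant_of_extensions)+

end
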